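(* Let $S$ be a finite $p$-group and $\mathcal{A}$ a bifree $S$-algebra. Then $\mathcal{A}$ possesses an $(S,S)$-invariant $\mathcal{O}$-basis contained in $\mathcal{A}^\times$ if and only if for every subgroup $P\le S$ and every $\varphi\in\mathrm{Hom}_{\mathfrak{F}_S(\mathcal{A})}(P,S)$ we have $\mathcal{A}^\times\cap{}^\varphi\mathcal{A}^P\neq\emptyset$.
   Context: $\mathcal{O}$ is a complete local noetherian domain with maximal ideal $\mathfrak{m}$ and algebraically closed (hence infinite) residue field $k$ of characteristic $p$ (possibly $\mathcal{O}=k$). An interior $S$-algebra is an $\mathcal{O}$-free finite-rank $\mathcal{O}$-algebra $\mathcal{A}$ with a group homomorphism $S\to\mathcal{A}^\times$; $S\times S$ acts by $(s,t)a=sat^{-1}$. It is bifree if it has an $\mathcal{O}$-basis $Y$ with $sY=Y=Ys$ for all $s\in S$ (an $(S,S)$-invariant basis) on which the left and right $S$-actions are free. ${}^\varphi\mathcal{A}^P=\{a:\varphi(p)a=ap\ \forall p\in P\}$. For $U\le S\times S$, $\mathcal{A}(U)=\mathcal{A}^U/(\mathfrak{m}\mathcal{A}^U+\sum_{V<U}\mathrm{tr}_V^U\mathcal{A}^V)$; for injective $\varphi:P\to S$, $\mathcal{A}(\varphi)=\mathcal{A}(\Delta(\varphi,P))$ with $\Delta(\varphi,P)=\{(\varphi(p),p)\}$. $\mathfrak{F}_S(\mathcal{A})$ has objects the subgroups of $S$ and $\mathrm{Hom}(P,Q)=\{\varphi:P\to Q$ injective homomorphism$:\mathcal{A}(\varphi)\ne0\}$.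 *)

theory Defs
  imports "HOL-Algebra.Coset" "HOL-Computational_Algebra.Primes"
begin

definition oideal :: "'o::idom set \<Rightarrow> bool" where
  "oideal I \<longleftrightarrow> 0 \<in> I \<and> (\<forall>x\<in>I. \<forall>y\<in>I. x + y \<in> I) \<and> (\<forall>r x. x \<in> I \<longrightarrow> r * x \<in> I)"

definition igen :: "'o::idom set \<Rightarrow> 'o set" where
  "igen G = {x. \<exists>F c. finite F \<and> F \<subseteq> G \<and> x = (\<Sum>f\<in>F. c f * f)}"

definition maximal_oideal :: "'o::idom set \<Rightarrow> bool" where
  "maximal_oideal I \<longleftrightarrow> oideal I \<and> I \<noteq> UNIV \<and>
     (\<forall>J. oideal J \<and> I \<subseteq> J \<longrightarrow> J = I \<or> J = UNIV)"

fun ipow :: "'o::idom set \<Rightarrow> nat \<Rightarrow> 'o set" where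
  "ipow m 0 = UNIV"
| "ipow m (Suc n) = igen {a * b | a b. a \<in> m \<and> b \<in> ipow m n}"

text \<open>O is a complete local noetherian domain with maximal ideal m and algebraically
  closed residue field O/m of characteristic p.\<close>
definition standing_O :: "'o::idom set \<Rightarrow> nat \<Rightarrow> bool" where
  "standing_O m p \<longleftrightarrow>
     maximal_oideal m \<and> (\<forall>J::'o set. maximal_oideal J \<longrightarrow> J = m) \<and>
     (\<forall>I::'o set. oideal I \<longrightarrow> (\<exists>F. finite F \<and> I = igen F)) \<and>
     (\<Inter>n. ipow m n) = {0} \<and>
     (\<forall>x::nat \<Rightarrow> 'o. (\<forall>n. \<exists>N. \<forall>i\<ge>N. \<forall>j\<ge>N. x i - x j \<in> ipow m n) \<longrightarrow>
        (\<exists>L. \<forall>n. \<exists>N. \<forall>i\<ge>N. x i - L \<in> ipow m n)) \<and>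
     (\<forall>n::nat. n \<ge> 1 \<longrightarrow> (\<forall>c::nat \<Rightarrow> 'o. \<exists>x. x ^ n + (\<Sum>i<n. c i * x ^ i) \<in> m)) \<and>
     prime p \<and> of_nat p \<in> m"

definition oalg :: "('o::idom \<Rightarrow> 'a::{ring,monoid_mult} \<Rightarrow> 'a) \<Rightarrow> bool" where
  "oalg smult \<longleftrightarrow>
     (\<forall>r x y. smult r (x + y) = smult r x + smult r y) \<and>
     (\<forall>r s x. smult (r + s) x = smult r x + smult s x) \<and>
     (\<forall>r s x. smult (r * s) x = smult r (smult s x)) \<and>
     (\<forall>x. smult 1 x = x) \<and>
     (\<forall>r x y. smult r (x * y) = smult r x * y) \<and>
     (\<forall>r x y. smult r (x * y) = x * smult r y)"

definition ospan :: "('o::idom \<Rightarrow> 'a::{ring,monoid_mult} \<Rightarrow> 'a) \<Rightarrow> 'a set \<Rightarrow> 'a set" where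
  "ospan smult X = {x. \<exists>F c. finite F \<and> F \<subseteq> X \<and> x = (\<Sum>b\<in>F. smult (c b) b)}"

definition is_obasis :: "('o::idom \<Rightarrow> 'a::{ring,monoid_mult} \<Rightarrow> 'a) \<Rightarrow> 'a set \<Rightarrow> bool" where
  "is_obasis smult Y \<longleftrightarrow> finite Y \<and>
     (\<forall>c. (\<Sum>y\<in>Y. smult (c y) y) = 0 \<longrightarrow> (\<forall>y\<in>Y. c y = 0)) \<and>
     (\<forall>a. \<exists>c. a = (\<Sum>y\<in>Y. smult (c y) y))"

definition unitsA :: "'a::{ring,monoid_mult} set" where
  "unitsA = {a. \<exists>b. a * b = 1 \<and> b * a = 1}"

definition interior_alg ::
  "('o::idom \<Rightarrow> 'a::{ring,monoid_mult} \<Rightarrow> 'a) \<Rightarrow> ('g,'b) monoid_scheme \<Rightarrow> ('g \<Rightarrow> 'a) \<Rightarrow> bool" where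
  "interior_alg smult S \<sigma> \<longleftrightarrow> oalg smult \<and> (\<exists>Y. is_obasis smult Y) \<and>
     \<sigma> \<one>\<^bsub>S\<^esub> = 1 \<and>
     (\<forall>s\<in>carrier S. \<forall>t\<in>carrier S. \<sigma> (s \<otimes>\<^bsub>S\<^esub> t) = \<sigma> s * \<sigma> t)"

definition SS_invariant :: "('g,'b) monoid_scheme \<Rightarrow> ('g \<Rightarrow> 'a::{ring,monoid_mult}) \<Rightarrow> 'a set \<Rightarrow> bool" where
  "SS_invariant S \<sigma> Y \<longleftrightarrow>
     (\<forall>s\<in>carrier S. (\<lambda>y. \<sigma> s * y) ` Y = Y \<and> (\<lambda>y. y * \<sigma> s) ` Y = Y)"

definition bifree ::
  "('o::idom \<Rightarrow> 'a::{ring,monoid_mult} \<Rightarrow> 'a) \<Rightarrow> ('g,'b) monoid_scheme \<Rightarrow> ('g \<Rightarrow> 'a) \<Rightarrow> bool" where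
  "bifree smult S \<sigma> \<longleftrightarrow> (\<exists>Y. is_obasis smult Y \<and> SS_invariant S \<sigma> Y \<and>
     (\<forall>s\<in>carrier S. \<forall>y\<in>Y. \<sigma> s * y = y \<longrightarrow> s = \<one>\<^bsub>S\<^esub>) \<and>
     (\<forall>s\<in>carrier S. \<forall>y\<in>Y. y * \<sigma> s = y \<longrightarrow> s = \<one>\<^bsub>S\<^esub>))"

definition act :: "('g,'b) monoid_scheme \<Rightarrow> ('g \<Rightarrow> 'a::{ring,monoid_mult}) \<Rightarrow> 'g \<times> 'g \<Rightarrow> 'a \<Rightarrow> 'a" where
  "act S \<sigma> u a = \<sigma> (fst u) * a * \<sigma> (inv\<^bsub>S\<^esub> (snd u))"

definition fixpts :: "('g,'b) monoid_scheme \<Rightarrow> ('g \<Rightarrow> 'a::{ring,monoid_mult}) \<Rightarrow> ('g \<times> 'g) set \<Rightarrow> 'a set" where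
  "fixpts S \<sigma> U = {a. \<forall>u\<in>U. act S \<sigma> u a = a}"

definition trace ::
  "('g,'b) monoid_scheme \<Rightarrow> ('g \<Rightarrow> 'a::{ring,monoid_mult}) \<Rightarrow> ('g \<times> 'g) set \<Rightarrow> ('g \<times> 'g) set \<Rightarrow> 'a \<Rightarrow> 'a" where
  "trace S \<sigma> U V a = (\<Sum>C\<in>(\<lambda>u. u <#\<^bsub>S \<times>\<times> S\<^esub> V) ` U. act S \<sigma> (SOME u. u \<in> C) a)"

text \<open>A(U) \<noteq> 0, i.e. A^U is not contained in m A^U + sum of tr_V^U(A^V), V < U.\<close>
definition brauer_nonzero ::
  "('o::idom \<Rightarrow> 'a::{ring,monoid_mult} \<Rightarrow> 'a) \<Rightarrow> 'o set \<Rightarrow> ('g,'b) monoid_scheme \<Rightarrow> ('g \<Rightarrow> 'a)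
     \<Rightarrow> ('g \<times> 'g) set \<Rightarrow> bool" where
  "brauer_nonzero smult m S \<sigma> U \<longleftrightarrow>
     \<not> (fixpts S \<sigma> U \<subseteq> ospan smult
          ({smult r a | r a. r \<in> m \<and> a \<in> fixpts S \<sigma> U} \<union>
           (\<Union>V\<in>{V. subgroup V (S \<times>\<times> S) \<and> V \<subset> U}. trace S \<sigma> U V ` fixpts S \<sigma> V)))"

definition Delta :: "('g \<Rightarrow> 'g) \<Rightarrow> 'g set \<Rightarrow> ('g \<times> 'g) set" where
  "Delta \<phi> P = {(\<phi> x, x) | x. x \<in> P}"

definition fusion_hom ::
  "('o::idom \<Rightarrow> 'a::{ring,monoid_mult} \<Rightarrow> 'a) \<Rightarrow> 'o set \<Rightarrow> ('g,'b) monoid_scheme \<Rightarrow> ('g \<Rightarrow> 'a)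
     \<Rightarrow> 'g set \<Rightarrow> ('g \<Rightarrow> 'g) set" where
  "fusion_hom smult m S \<sigma> P = {\<phi>. \<phi> \<in> hom (S\<lparr>carrier := P\<rparr>) S \<and> inj_on \<phi> P \<and>
       brauer_nonzero smult m S \<sigma> (Delta \<phi> P)}"

definition twfix :: "('g,'b) monoid_scheme \<Rightarrow> ('g \<Rightarrow> 'a::{ring,monoid_mult}) \<Rightarrow> ('g \<Rightarrow> 'g) \<Rightarrow> 'g set \<Rightarrow> 'a set" where
  "twfix S \<sigma> \<phi> P = {a. \<forall>x\<in>P. \<sigma> (\<phi> x) * a = a * \<sigma> x}"

end

theory Submission
  imports Defs "Jordan_Normal_Form.Char_Poly" "HOL-Algebra.Left_Coset"
begin

text \<open>
  If \<open>Y\<close> is an \<open>(S,S)\<close>-invariant basis of units and \<open>\<phi>\<close> is a morphism of \<open>F\<^sub>S(A)\<close>,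
  then \<open>A(\<Delta>(\<phi>,P)) \<noteq> 0\<close> forces \<open>\<Delta>(\<phi>,P)\<close> to fix some \<open>y \<in> Y\<close>: otherwise every
  \<open>\<Delta>(\<phi>,P)\<close>-fixed element is a combination of relative traces from the proper stabilisers.
  Such a \<open>y\<close> is a unit in \<open>\<^sup>\<phi>A\<^sup>P\<close>.

  Conversely, start from a bifree basis and remove the non-units one orbit at a time. The
  stabiliser in \<open>S \<times> S\<close> of a basis element \<open>y\<close> is a twisted diagonal \<open>\<Delta>(\<phi>,P)\<close> with \<open>\<phi>\<close>
  injective, and \<open>A(\<Delta>(\<phi>,P)) \<noteq> 0\<close> because \<open>y\<close> is fixed and all indices of proper subgroups
  of a \<open>p\<close>-group lie in \<open>m\<close>; so the hypothesis provides a unit \<open>u\<close> fixed by \<open>\<Delta>(\<phi>,P)\<close>.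
  Replacing each \<open>g y\<close> of the orbit by \<open>g (y + \<mu> u)\<close> keeps a basis and produces units for
  all \<open>\<mu>\<close> outside finitely many residue classes: the change of basis has determinant
  \<open>1\<close> at \<open>\<mu> = 0\<close>, and in \<open>y + \<mu> u = (y u\<^sup>-\<^sup>1 + \<mu>) u\<close> the first factor is invertible
  unless \<open>-\<mu>\<close> is a root modulo \<open>m\<close> of the characteristic polynomial of \<open>y u\<^sup>-\<^sup>1\<close>.
  As the residue field is infinite, such \<open>\<mu>\<close> exist.
\<close>

section \<open>Coordinates in free modules\<close>

locale oalgebra =
  fixes smult :: "'o::idom \<Rightarrow> 'a::{ring,monoid_mult} \<Rightarrow> 'a"
  assumes oalg: "oalg smult"
begin

lemma smult_add_right: "smult r (x + y) = smult r x + smult r y"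
  and smult_add_left: "smult (r + s) x = smult r x + smult s x"
  and smult_smult: "smult r (smult s x) = smult (r * s) x"
  and smult_one: "smult 1 x = x"
  and smult_mult_left: "smult r (x * y) = smult r x * y"
  and smult_mult_right: "smult r (x * y) = x * smult r y"
  using oalg unfolding oalg_def by auto

lemma smult_zero_right [simp]: "smult r 0 = 0"
  using smult_add_right[of r 0 0] by simp

lemma smult_zero_left [simp]: "smult 0 x = 0"
  using smult_add_left[of 0 0 x] by simp

lemma smult_minus_left: "smult (- r) x = - smult r x"
proof -
  have "smult r x + smult (- r) x = 0" using smult_add_left[of r "- r" x] by simp
  then show ?thesis by (rule add.inverse_unique[symmetric])
qed

lemma smult_diff_left: "smult (r - s) x = smult r x - smult s x"
  using smult_add_left[of r "- s" x] smult_minus_left by simp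

lemma smult_sum_right: "smult r (sum f A) = (\<Sum>i\<in>A. smult r (f i))"
  by (induct A rule: infinite_finite_induct) (auto simp: smult_add_right)

lemma smult_one_mult: "smult r x = smult r 1 * x"
  using smult_mult_left[of r 1 x] by simp

lemma ospan_zero: "0 \<in> ospan smult X"
  unfolding ospan_def by (rule CollectI, rule exI[of _ "{}"]) auto

lemma ospan_base: "x \<in> X \<Longrightarrow> x \<in> ospan smult X"
  unfolding ospan_def
  by (rule CollectI, rule exI[of _ "{x}"], rule exI[of _ "\<lambda>_. 1"]) (auto simp: smult_one)

lemma ospan_add:
  assumes "x \<in> ospan smult X" "y \<in> ospan smult X"
  shows "x + y \<in> ospan smult X"
proof -
  obtain F c where F: "finite F" "F \<subseteq> X" "x = (\<Sum>b\<in>F. smult (c b) b)"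
    using assms(1) unfolding ospan_def by auto
  obtain G d where G: "finite G" "G \<subseteq> X" "y = (\<Sum>b\<in>G. smult (d b) b)"
    using assms(2) unfolding ospan_def by auto
  let ?c = "\<lambda>b. if b \<in> F then c b else 0"
  let ?d = "\<lambda>b. if b \<in> G then d b else 0"
  have "(\<Sum>b\<in>F \<union> G. smult (?c b) b) = (\<Sum>b\<in>F. smult (?c b) b)"
    by (rule sum.mono_neutral_right) (use F G in auto)
  then have "x = (\<Sum>b\<in>F \<union> G. smult (?c b) b)" using F by simp
  moreover have "(\<Sum>b\<in>F \<union> G. smult (?d b) b) = (\<Sum>b\<in>G. smult (?d b) b)"
    by (rule sum.mono_neutral_right) (use F G in auto)
  then have "y = (\<Sum>b\<in>F \<union> G. smult (?d b) b)" using G by simp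
  ultimately have "x + y = (\<Sum>b\<in>F \<union> G. smult (?c b + ?d b) b)"
    by (simp add: sum.distrib smult_add_left)
  then show ?thesis unfolding ospan_def using F G
    by (intro CollectI exI[of _ "F \<union> G"] exI[of _ "\<lambda>b. ?c b + ?d b"]) auto
qed

lemma ospan_smult:
  assumes "x \<in> ospan smult X" shows "smult r x \<in> ospan smult X"
proof -
  obtain F c where F: "finite F" "F \<subseteq> X" "x = (\<Sum>b\<in>F. smult (c b) b)"
    using assms unfolding ospan_def by auto
  then have "smult r x = (\<Sum>b\<in>F. smult (r * c b) b)"
    by (simp add: smult_sum_right smult_smult)
  then show ?thesis unfolding ospan_def using F
    by (intro CollectI exI[of _ F] exI[of _ "\<lambda>b. r * c b"]) auto
qed

lemma ospan_sum: "(\<And>i. i \<in> I \<Longrightarrow> f i \<in> ospan smult X) \<Longrightarrow> sum f I \<in> ospan smult X"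
  by (induct I rule: infinite_finite_induct) (auto simp: ospan_zero ospan_add)

definition coord :: "'a set \<Rightarrow> 'a \<Rightarrow> 'a \<Rightarrow> 'o" where
  "coord Z a = (SOME c. a = (\<Sum>y\<in>Z. smult (c y) y))"

context
  fixes Z :: "'a set"
  assumes Z: "is_obasis smult Z"
begin

lemma basis_finite: "finite Z"
  using Z unfolding is_obasis_def by blast

lemma basis_indep: "(\<Sum>y\<in>Z. smult (c y) y) = 0 \<Longrightarrow> y \<in> Z \<Longrightarrow> c y = 0"
  using Z unfolding is_obasis_def by blast

lemma coord_expansion: "a = (\<Sum>y\<in>Z. smult (coord Z a y) y)"
proof -
  have "\<exists>c. a = (\<Sum>y\<in>Z. smult (c y) y)" using Z unfolding is_obasis_def by blast
  then show ?thesis unfolding coord_def by (rule someI_ex)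
qed

lemma coord_unique:
  assumes "a = (\<Sum>y\<in>Z. smult (c y) y)" and "w \<in> Z"
  shows "coord Z a w = c w"
proof -
  have "(\<Sum>y\<in>Z. smult (coord Z a y - c y) y) = 0"
    using coord_expansion[of a] assms(1) by (simp add: smult_diff_left sum_subtractf)
  from basis_indep[OF this assms(2)] show ?thesis by simp
qed

lemma coord_eqI:
  assumes "\<And>w. w \<in> Z \<Longrightarrow> coord Z a w = coord Z b w" shows "a = b"
proof -
  have "(\<Sum>y\<in>Z. smult (coord Z a y) y) = (\<Sum>y\<in>Z. smult (coord Z b y) y)"
    using assms by (intro sum.cong) auto
  then show ?thesis using coord_expansion[of a] coord_expansion[of b] by simp
qed

lemma coord_add: "w \<in> Z \<Longrightarrow> coord Z (a + b) w = coord Z a w + coord Z b w"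
proof (rule coord_unique)
  show "a + b = (\<Sum>y\<in>Z. smult (coord Z a y + coord Z b y) y)"
    by (subst coord_expansion[of a], subst coord_expansion[of b]) (simp add: smult_add_left sum.distrib)
qed

lemma coord_smult: "w \<in> Z \<Longrightarrow> coord Z (smult r a) w = r * coord Z a w"
proof (rule coord_unique)
  have "smult r a = smult r (\<Sum>y\<in>Z. smult (coord Z a y) y)" using coord_expansion by simp
  then show "smult r a = (\<Sum>y\<in>Z. smult (r * coord Z a y) y)"
    by (simp add: smult_sum_right smult_smult)
qed

lemma coord_zero: "w \<in> Z \<Longrightarrow> coord Z 0 w = 0"
  by (rule coord_unique[where c = "\<lambda>_. 0"]) auto

lemma coord_sum: "w \<in> Z \<Longrightarrow> coord Z (sum f I) w = (\<Sum>i\<in>I. coord Z (f i) w)"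
  by (induct I rule: infinite_finite_induct) (auto simp: coord_zero coord_add)

lemma coord_lincomb: "w \<in> Z \<Longrightarrow> coord Z (\<Sum>i\<in>I. smult (d i) (f i)) w = (\<Sum>i\<in>I. d i * coord Z (f i) w)"
  by (simp add: coord_sum coord_smult)

lemma coord_basis: "v \<in> Z \<Longrightarrow> w \<in> Z \<Longrightarrow> coord Z v w = (if w = v then 1 else 0)"
proof -
  assume v: "v \<in> Z" and w: "w \<in> Z"
  have "v = (\<Sum>y\<in>Z. if y = v then y else 0)" using basis_finite v by simp
  also have "\<dots> = (\<Sum>y\<in>Z. smult (if y = v then 1 else 0) y)"
    by (rule sum.cong) (auto simp: smult_one)
  finally show ?thesis by (rule coord_unique[OF _ w])
qed

end

definition olinear :: "('a \<Rightarrow> 'a) \<Rightarrow> bool" where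
  "olinear T \<longleftrightarrow> (\<forall>a b. T (a + b) = T a + T b) \<and> (\<forall>r a. T (smult r a) = smult r (T a))"

lemma olinear_sum:
  assumes "olinear T" shows "T (sum f I) = (\<Sum>i\<in>I. T (f i))"
proof -
  have "T 0 = 0" using assms smult_zero_left unfolding olinear_def by metis
  then show ?thesis using assms unfolding olinear_def
    by (induct I rule: infinite_finite_induct) auto
qed

lemma olinear_lincomb:
  "olinear T \<Longrightarrow> T (\<Sum>i\<in>I. smult (c i) (f i)) = (\<Sum>i\<in>I. smult (c i) (T (f i)))"
  by (simp add: olinear_sum) (simp add: olinear_def)

lemma olinear_coord_combination:
  assumes Z: "is_obasis smult Z" and Ob: "Ob \<subseteq> Z"
  shows "olinear (\<lambda>a. \<Sum>w\<in>Ob. smult (coord Z a w) (h w))"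
proof -
  have "(\<Sum>w\<in>Ob. smult (coord Z (a + b) w) (h w))
      = (\<Sum>w\<in>Ob. smult (coord Z a w) (h w) + smult (coord Z b w) (h w))" for a b
    by (rule sum.cong) (use Ob in \<open>auto simp: coord_add[OF Z] smult_add_left\<close>)
  moreover have "(\<Sum>w\<in>Ob. smult (coord Z (smult r a) w) (h w))
      = (\<Sum>w\<in>Ob. smult r (smult (coord Z a w) (h w)))" for r a
    by (rule sum.cong) (use Ob in \<open>auto simp: coord_smult[OF Z] smult_smult\<close>)
  ultimately show ?thesis unfolding olinear_def by (simp add: sum.distrib smult_sum_right)
qed

lemma coord_combination_basis:
  assumes Z: "is_obasis smult Z" and Ob: "Ob \<subseteq> Z" and y: "y \<in> Z"
  shows "(\<Sum>w\<in>Ob. smult (coord Z y w) (h w)) = (if y \<in> Ob then h y else 0)"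
proof -
  have "(\<Sum>w\<in>Ob. smult (coord Z y w) (h w)) = (\<Sum>w\<in>Ob. if w = y then h w else 0)"
    using y Ob by (intro sum.cong) (auto simp: coord_basis[OF Z] smult_one)
  then show ?thesis using finite_subset[OF Ob basis_finite[OF Z]] by simp
qed

lemma obasis_image_bij:
  assumes Z: "is_obasis smult Z" and T: "olinear T" and bij: "bij T"
  shows "is_obasis smult (T ` Z)"
proof -
  have inj: "inj_on T Z" using bij bij_is_inj inj_on_subset by blast
  have reindex: "(\<Sum>z\<in>T ` Z. smult (c z) z) = T (\<Sum>y\<in>Z. smult (c (T y)) y)" for c
    by (simp add: sum.reindex[OF inj] olinear_lincomb[OF T])
  have "c z = 0" if "(\<Sum>z\<in>T ` Z. smult (c z) z) = 0" and "z \<in> T ` Z" for c z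
  proof -
    have "T (\<Sum>y\<in>Z. smult (c (T y)) y) = T 0"
      using that(1) olinear_sum[OF T, of "\<lambda>_. 0" "{}"] by (simp add: reindex)
    then have "(\<Sum>y\<in>Z. smult (c (T y)) y) = 0" using bij by (simp add: bij_is_inj inj_eq)
    then show ?thesis using basis_indep[OF Z, of "\<lambda>y. c (T y)"] that(2) by blast
  qed
  moreover have "\<exists>c. a = (\<Sum>z\<in>T ` Z. smult (c z) z)" for a
  proof -
    obtain b where b: "a = T b" using bij by (metis bij_pointE)
    have "(\<Sum>z\<in>T ` Z. smult (coord Z b (the_inv T z)) z) = T (\<Sum>y\<in>Z. smult (coord Z b y) y)"
      using bij by (simp add: reindex bij_is_inj the_inv_f_f)
    then have "a = (\<Sum>z\<in>T ` Z. smult (coord Z b (the_inv T z)) z)"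
      using coord_expansion[OF Z, of b] b by simp
    then show ?thesis by (rule exI[of _ "\<lambda>z. coord Z b (the_inv T z)"])
  qed
  ultimately show ?thesis
    using basis_finite[OF Z] unfolding is_obasis_def by blast
qed

end

lemma unit_if_bij_mult_left:
  fixes w :: "'a::{ring,monoid_mult}"
  assumes "bij ((*) w)"
  shows "w \<in> unitsA"
proof -
  obtain v where wv: "w * v = 1" using assms by (metis bij_pointE)
  have "w * (v * w) = w * 1" using wv by (simp flip: mult.assoc)
  then have "v * w = 1" using assms bij_is_inj injD by metis
  then show ?thesis unfolding unitsA_def using wv by blast
qed

section \<open>The coefficient ring\<close>

lemma oideal_Union_chain:
  assumes "C \<noteq> {}" and ideals: "\<And>J. J \<in> C \<Longrightarrow> oideal J"
    and chain: "\<And>X Y. X \<in> C \<Longrightarrow> Y \<in> C \<Longrightarrow> X \<subseteq> Y \<or> Y \<subseteq> X"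
  shows "oideal (\<Union>C)"
  unfolding oideal_def
proof (intro conjI ballI allI impI)
  show "0 \<in> \<Union>C" using assms(1) ideals unfolding oideal_def by blast
  show "x + y \<in> \<Union>C" if xy: "x \<in> \<Union>C" "y \<in> \<Union>C" for x y
  proof -
    obtain X Y where XY: "X \<in> C" "Y \<in> C" "x \<in> X" "y \<in> Y" using xy by blast
    then have "x \<in> X \<union> Y" "y \<in> X \<union> Y" "X \<union> Y \<in> C"
      using chain[OF XY(1,2)] by (auto simp: sup.absorb1 sup.absorb2)
    then show ?thesis using ideals unfolding oideal_def by blast
  qed
  show "r * x \<in> \<Union>C" if "x \<in> \<Union>C" for r x
    using that ideals unfolding oideal_def by blast
qed

lemma oideal_le_maximal:
  fixes I :: "'o::idom set"
  assumes I: "oideal I" and one: "1 \<notin> I"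
  shows "\<exists>M. maximal_oideal M \<and> I \<subseteq> M"
proof -
  define \<A> where "\<A> = {J. oideal J \<and> I \<subseteq> J \<and> 1 \<notin> J}"
  have "\<exists>M\<in>\<A>. \<forall>J\<in>\<A>. M \<subseteq> J \<longrightarrow> J = M"
  proof (rule subset_Zorn_nonempty)
    show "\<A> \<noteq> {}" using I one unfolding \<A>_def by blast
  next
    fix C assume C: "C \<noteq> {}" "subset.chain \<A> C"
    then have CA: "C \<subseteq> \<A>" and lin: "\<And>X Y. X \<in> C \<Longrightarrow> Y \<in> C \<Longrightarrow> X \<subseteq> Y \<or> Y \<subseteq> X"
      unfolding subset.chain_def by auto
    have "oideal (\<Union>C)" using C(1) CA lin unfolding \<A>_def by (intro oideal_Union_chain) auto
    then show "\<Union>C \<in> \<A>" using C CA unfolding \<A>_def by blast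
  qed
  then obtain M where M: "M \<in> \<A>" and Mmax: "\<And>J. J \<in> \<A> \<Longrightarrow> M \<subseteq> J \<Longrightarrow> J = M" by blast
  have "maximal_oideal M" unfolding maximal_oideal_def
  proof (intro conjI allI impI)
    show "oideal M" "M \<noteq> UNIV" using M unfolding \<A>_def by auto
    fix J assume J: "oideal J \<and> M \<subseteq> J"
    show "J = M \<or> J = UNIV"
    proof (cases "1 \<in> J")
      case True
      then have "x \<in> J" for x using J unfolding oideal_def by (metis mult_1_right)
      then show ?thesis by auto
    next
      case False
      then have "J \<in> \<A>" using J M unfolding \<A>_def by auto
      then show ?thesis using J Mmax by blast
    qed
  qed
  then show ?thesis using M unfolding \<A>_def by blast
qed

locale coefficient_ring =
  fixes m :: "'o::idom set" and p :: nat
  assumes standing: "standing_O m p"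
begin

lemma m_maximal: "maximal_oideal m"
  and m_unique: "maximal_oideal J \<Longrightarrow> J = m"
  and p_prime: "prime p"
  and p_in_m: "of_nat p \<in> m"
  and residue_field_alg_closed: "n \<ge> 1 \<Longrightarrow> \<exists>x. x ^ n + (\<Sum>i<n. c i * x ^ i) \<in> m"
  using standing unfolding standing_O_def by simp_all

lemma m_zero: "0 \<in> m"
  and m_add: "x \<in> m \<Longrightarrow> y \<in> m \<Longrightarrow> x + y \<in> m"
  and m_mult_left: "x \<in> m \<Longrightarrow> r * x \<in> m"
  using m_maximal unfolding maximal_oideal_def oideal_def by simp_all

lemma m_mult_right: "x \<in> m \<Longrightarrow> x * r \<in> m"
  using m_mult_left[of x r] by (simp add: mult.commute)

lemma m_diff: "x \<in> m \<Longrightarrow> y \<in> m \<Longrightarrow> x - y \<in> m"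
  using m_add[of x "- y"] m_mult_left[of y "- 1"] by simp

lemma m_sum: "(\<And>i. i \<in> I \<Longrightarrow> f i \<in> m) \<Longrightarrow> sum f I \<in> m"
  by (induct I rule: infinite_finite_induct) (auto simp: m_zero m_add)

lemma one_notin_m: "1 \<notin> m"
  using m_maximal m_mult_left[of 1] unfolding maximal_oideal_def by auto

lemma unit_if_notin_m:
  assumes "c \<notin> m" shows "\<exists>d. c * d = 1"
proof (rule ccontr)
  assume no_inverse: "\<nexists>d. c * d = 1"
  define I where "I = range (\<lambda>r. c * r)"
  have "oideal I" unfolding oideal_def I_def
  proof (intro conjI ballI allI impI)
    show "0 \<in> range ((*) c)" by (rule range_eqI[of _ _ 0]) simp
    show "x + y \<in> range ((*) c)" if "x \<in> range ((*) c)" "y \<in> range ((*) c)" for x y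
      using that by (auto simp flip: distrib_left)
    show "r * x \<in> range ((*) c)" if "x \<in> range ((*) c)" for r x
      using that by (auto simp: mult.left_commute[of r c])
  qed
  moreover have "1 \<notin> I" using no_inverse unfolding I_def by (metis rangeE)
  ultimately obtain M where "maximal_oideal M" "I \<subseteq> M" using oideal_le_maximal by blast
  moreover have "c \<in> I" unfolding I_def by (metis mult_1_right rangeI)
  ultimately show False using assms m_unique by blast
qed

lemma m_prime:
  assumes "x * y \<in> m" and "x \<notin> m" shows "y \<in> m"
proof -
  obtain d where "x * d = 1" using unit_if_notin_m[OF assms(2)] by blast
  then have "y = d * (x * y)" by (metis mult.assoc mult.commute mult_1_left)
  then show "y \<in> m" using m_mult_left[OF assms(1)] by metis
qed

lemma of_nat_in_m_if_dvd: "p dvd k \<Longrightarrow> (of_nat k :: 'o) \<in> m"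
  using m_mult_right[OF p_in_m] by (elim dvdE) simp

text \<open>The residue field is algebraically closed, hence infinite: a root of
  \<open>\<Prod>a\<in>F. (X - a)\<close> \<open>+ 1\<close> modulo \<open>m\<close> lies in none of the residue classes of \<open>F\<close>.\<close>

lemma exists_avoiding_residues:
  assumes F: "finite F" shows "\<exists>x. \<forall>a\<in>F. x - a \<notin> m"
proof -
  define F' where "F' = insert 0 F"
  have F': "finite F'" "F' \<noteq> {}" using F unfolding F'_def by auto
  define n where "n = card F'"
  have n1: "n \<ge> 1" using F' unfolding n_def by (simp add: Suc_leI card_gt_0_iff)
  define h where "h = (\<Prod>a\<in>F'. [:- a, 1:]) + 1"
  have dq: "degree (\<Prod>a\<in>F'. [:- a, 1:]) = n" unfolding n_def
    by (subst degree_prod_eq_sum_degree) auto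
  have lq: "lead_coeff (\<Prod>a\<in>F'. [:- a, 1:]) = 1" by (simp add: lead_coeff_prod)
  have dh: "degree h = n" and ch: "coeff h n = 1"
    using dq lq n1 unfolding h_def by (simp_all add: degree_add_eq_left)
  obtain x where x: "x ^ n + (\<Sum>i<n. coeff h i * x ^ i) \<in> m"
    using residue_field_alg_closed[OF n1] by blast
  have "poly h x = x ^ n + (\<Sum>i<n. coeff h i * x ^ i)"
    using ch by (simp add: poly_altdef dh lessThan_Suc_atMost[symmetric])
  then have hx: "poly h x \<in> m" using x by simp
  have "x - a \<notin> m" if a: "a \<in> F" for a
  proof
    assume "x - a \<in> m"
    moreover have "(\<Prod>b\<in>F'. x - b) = (x - a) * (\<Prod>b\<in>F' - {a}. x - b)"
      using a F' unfolding F'_def by (simp add: prod.remove)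
    ultimately have "(\<Prod>b\<in>F'. x - b) \<in> m" using m_mult_right by simp
    moreover have "poly h x = (\<Prod>b\<in>F'. x - b) + 1" unfolding h_def by (simp add: poly_prod)
    ultimately show False using hx m_diff one_notin_m by (metis add_diff_cancel_left')
  qed
  then show ?thesis by blast
qed

definition generic :: "('o \<Rightarrow> bool) \<Rightarrow> bool" where
  "generic P \<longleftrightarrow> (\<exists>R. finite R \<and> (\<forall>\<mu>. (\<forall>r\<in>R. \<mu> - r \<notin> m) \<longrightarrow> P \<mu>))"

lemma generic_conj: "generic P \<Longrightarrow> generic Q \<Longrightarrow> generic (\<lambda>\<mu>. P \<mu> \<and> Q \<mu>)"
  unfolding generic_def by (metis (no_types) Un_iff finite_UnI)

lemma generic_mono: "generic P \<Longrightarrow> (\<And>\<mu>. P \<mu> \<Longrightarrow> Q \<mu>) \<Longrightarrow> generic Q"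
  unfolding generic_def by blast

lemma generic_obtain: "generic P \<Longrightarrow> \<exists>\<mu>. P \<mu>"
  unfolding generic_def using exists_avoiding_residues by blast

lemma generic_not_congruent: "generic (\<lambda>\<mu>. \<mu> - a \<notin> m)"
  unfolding generic_def by (rule exI[of _ "{a}"]) simp

lemma generic_poly_notin_m:
  fixes f :: "'o poly"
  assumes "\<exists>i. coeff f i \<notin> m"
  shows "generic (\<lambda>\<mu>. poly f \<mu> \<notin> m)"
  using assms
proof (induction "degree f" arbitrary: f rule: less_induct)
  case less
  show ?case
  proof (cases "\<exists>a. poly f a \<in> m")
    case False then show ?thesis unfolding generic_def by blast
  next
    case True
    then obtain a where a: "poly f a \<in> m" by blast
    define c where "c = poly f a"
    have "[:- a, 1:] dvd f - [:c:]" unfolding c_def by (simp add: poly_eq_0_iff_dvd[symmetric])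
    then obtain g where fg: "f = [:- a, 1:] * g + [:c:]" by (metis diff_eq_eq dvdE)
    have coeff_f: "coeff f i = coeff g (i - 1) * of_bool (i > 0) - a * coeff g i + of_bool (i = 0) * c" for i
      unfolding fg by (cases i) (simp_all add: coeff_pCons)
    have "\<exists>i. coeff g i \<notin> m"
    proof (rule ccontr)
      assume "\<nexists>i. coeff g i \<notin> m"
      then have "coeff f i \<in> m" for i
        using a m_zero unfolding coeff_f c_def
        by (intro m_add m_diff) (auto intro: m_mult_right m_mult_left)
      then show False using less.prems by blast
    qed
    moreover have "degree g < degree f"
    proof -
      have "g \<noteq> 0" using calculation m_zero by auto
      then have "degree ([:- a, 1:] * g) = degree g + 1" by (subst degree_mult_eq) auto
      then have "degree f = degree g + 1" unfolding fg by (subst degree_add_eq_left) auto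
      then show ?thesis by simp
    qed
    ultimately have "generic (\<lambda>\<mu>. poly g \<mu> \<notin> m)" using less.hyps by blast
    then show ?thesis
    proof (rule generic_mono[OF generic_conj[OF _ generic_not_congruent[of a]]])
      fix \<mu> assume \<mu>: "poly g \<mu> \<notin> m \<and> \<mu> - a \<notin> m"
      have "poly f \<mu> = (\<mu> - a) * poly g \<mu> + c" unfolding fg by (simp add: algebra_simps)
      then show "poly f \<mu> \<notin> m"
        using \<mu> m_prime m_diff a unfolding c_def by (metis add_diff_cancel_right')
    qed
  qed
qed

end

section \<open>Generic invertibility\<close>

definition pencil_mat :: "'o::comm_ring_1 mat \<Rightarrow> 'o mat \<Rightarrow> 'o poly mat" where
  "pencil_mat A B = mat (dim_row A) (dim_col A) (\<lambda>ij. [:B $$ ij, A $$ ij:])"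

lemma poly_det_pencil_mat:
  assumes "A \<in> carrier_mat n n" "B \<in> carrier_mat n n"
  shows "poly (det (pencil_mat A B)) \<mu> = det (\<mu> \<cdot>\<^sub>m A + B)"
proof -
  have eval: "comm_ring_hom (\<lambda>q. poly q \<mu>)" by unfold_locales auto
  have "map_mat (\<lambda>q. poly q \<mu>) (pencil_mat A B) = \<mu> \<cdot>\<^sub>m A + B"
    by (rule eq_matI) (use assms in \<open>auto simp: pencil_mat_def algebra_simps\<close>)
  then show ?thesis using comm_ring_hom.hom_det[OF eval, of "pencil_mat A B"] by simp
qed

context coefficient_ring
begin

lemma invertible_if_det_notin_m:
  assumes M: "M \<in> carrier_mat n n" and det: "det M \<notin> m"
  shows "\<exists>M'. M' \<in> carrier_mat n n \<and> M * M' = 1\<^sub>m n \<and> M' * M = 1\<^sub>m n"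
proof -
  obtain d where d: "det M * d = 1" using unit_if_notin_m[OF det] by blast
  define M' where "M' = d \<cdot>\<^sub>m adj_mat M"
  have adj: "adj_mat M \<in> carrier_mat n n" using adj_mat[OF M] by blast
  have "M * M' = d \<cdot>\<^sub>m (M * adj_mat M)" unfolding M'_def using M adj by (simp add: mult_smult_distrib)
  also have "\<dots> = 1\<^sub>m n" using adj_mat(2)[OF M] d by (intro eq_matI) (auto simp: mult.commute)
  finally have right: "M * M' = 1\<^sub>m n" .
  have "M' * M = d \<cdot>\<^sub>m (adj_mat M * M)" unfolding M'_def using M adj by (simp add: mult_smult_assoc_mat)
  also have "\<dots> = 1\<^sub>m n" using adj_mat(3)[OF M] d by (intro eq_matI) (auto simp: mult.commute)
  finally have left: "M' * M = 1\<^sub>m n" .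
  show ?thesis by (rule exI[of _ M']) (use adj right left in \<open>simp add: M'_def\<close>)
qed

lemma generic_invertible_pencil:
  assumes A: "A \<in> carrier_mat n n" and B: "B \<in> carrier_mat n n"
    and nonzero: "\<exists>i. coeff (det (pencil_mat A B)) i \<notin> m"
  shows "generic (\<lambda>\<mu>. \<exists>M'. M' \<in> carrier_mat n n \<and>
           (\<mu> \<cdot>\<^sub>m A + B) * M' = 1\<^sub>m n \<and> M' * (\<mu> \<cdot>\<^sub>m A + B) = 1\<^sub>m n)"
  using generic_poly_notin_m[OF nonzero]
proof (rule generic_mono)
  fix \<mu> assume "poly (det (pencil_mat A B)) \<mu> \<notin> m"
  then have "det (\<mu> \<cdot>\<^sub>m A + B) \<notin> m" using poly_det_pencil_mat[OF A B] by simp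
  then show "\<exists>M'. M' \<in> carrier_mat n n \<and> (\<mu> \<cdot>\<^sub>m A + B) * M' = 1\<^sub>m n \<and> M' * (\<mu> \<cdot>\<^sub>m A + B) = 1\<^sub>m n"
    using invertible_if_det_notin_m[of "\<mu> \<cdot>\<^sub>m A + B" n] A B by simp
qed

end

context oalgebra
begin

definition coord_vec :: "'a set \<Rightarrow> (nat \<Rightarrow> 'a) \<Rightarrow> nat \<Rightarrow> 'a \<Rightarrow> 'o vec" where
  "coord_vec Z e n a = vec n (\<lambda>i. coord Z a (e i))"

definition matrix_of :: "'a set \<Rightarrow> (nat \<Rightarrow> 'a) \<Rightarrow> nat \<Rightarrow> ('a \<Rightarrow> 'a) \<Rightarrow> 'o mat" where
  "matrix_of Z e n T = mat n n (\<lambda>(i, j). coord Z (T (e j)) (e i))"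

lemma dim_matrix_of [simp]:
  "dim_row (matrix_of Z e n T) = n" "dim_col (matrix_of Z e n T) = n"
  unfolding matrix_of_def by simp_all

lemma olinear_id: "olinear (\<lambda>a. a)"
  unfolding olinear_def by simp

lemma olinear_pencil:
  assumes "olinear T0" "olinear T1" shows "olinear (\<lambda>a. T0 a + smult \<mu> (T1 a))"
  unfolding olinear_def
proof (intro conjI allI)
  fix a b
  show "T0 (a + b) + smult \<mu> (T1 (a + b)) = T0 a + smult \<mu> (T1 a) + (T0 b + smult \<mu> (T1 b))"
    using assms unfolding olinear_def by (simp add: smult_add_right ac_simps)
next
  fix r a
  have "smult \<mu> (smult r (T1 a)) = smult r (smult \<mu> (T1 a))"
    by (simp add: smult_smult mult.commute)
  then show "T0 (smult r a) + smult \<mu> (T1 (smult r a)) = smult r (T0 a + smult \<mu> (T1 a))"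
    using assms unfolding olinear_def by (simp add: smult_add_right)
qed

context
  fixes Z :: "'a set" and e :: "nat \<Rightarrow> 'a" and n :: nat
  assumes Z: "is_obasis smult Z" and e: "bij_betw e {0..<n} Z"
begin

lemma enum_in_basis: "i < n \<Longrightarrow> e i \<in> Z"
  using e unfolding bij_betw_def by auto

lemma coord_enum: "i < n \<Longrightarrow> j < n \<Longrightarrow> coord Z (e j) (e i) = (if i = j then 1 else 0)"
  using coord_basis[OF Z enum_in_basis enum_in_basis, of j i] e
  unfolding bij_betw_def inj_on_def by auto

lemma coord_vec_carrier [simp]: "coord_vec Z e n a \<in> carrier_vec n"
  unfolding coord_vec_def by simp

lemma matrix_of_carrier [simp]: "matrix_of Z e n T \<in> carrier_mat n n"
  unfolding matrix_of_def by simp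

lemma coord_vec_inj: "coord_vec Z e n a = coord_vec Z e n b \<Longrightarrow> a = b"
proof (rule coord_eqI[OF Z])
  fix w assume eq: "coord_vec Z e n a = coord_vec Z e n b" and "w \<in> Z"
  then obtain i where "i < n" "w = e i" using e unfolding bij_betw_def by auto
  then show "coord Z a w = coord Z b w" using eq unfolding coord_vec_def by (metis index_vec)
qed

lemma coord_vec_lincomb:
  assumes "v \<in> carrier_vec n"
  shows "coord_vec Z e n (\<Sum>j<n. smult (v $ j) (e j)) = v"
proof (rule eq_vecI)
  fix i assume "i < dim_vec v"
  then have i: "i < n" using assms by simp
  have "coord Z (\<Sum>j<n. smult (v $ j) (e j)) (e i) = (\<Sum>j<n. v $ j * coord Z (e j) (e i))"
    by (rule coord_lincomb[OF Z enum_in_basis[OF i]])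
  also have "\<dots> = (\<Sum>j<n. if j = i then v $ j else 0)"
    by (rule sum.cong) (use i coord_enum in auto)
  finally show "coord_vec Z e n (\<Sum>j<n. smult (v $ j) (e j)) $ i = v $ i"
    using i by (simp add: coord_vec_def)
qed (use assms in \<open>simp add: coord_vec_def\<close>)

lemma coord_vec_olinear:
  assumes T: "olinear T"
  shows "coord_vec Z e n (T a) = matrix_of Z e n T *\<^sub>v coord_vec Z e n a"
proof (rule eq_vecI)
  fix i assume "i < dim_vec (matrix_of Z e n T *\<^sub>v coord_vec Z e n a)"
  then have i: "i < n" by (simp add: matrix_of_def)
  have "a = (\<Sum>y\<in>Z. smult (coord Z a y) y)" by (rule coord_expansion[OF Z])
  also have "\<dots> = (\<Sum>j<n. smult (coord Z a (e j)) (e j))"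
    unfolding atLeast0LessThan[symmetric] by (rule sum.reindex_bij_betw[OF e, symmetric])
  finally have "T a = (\<Sum>j<n. smult (coord Z a (e j)) (T (e j)))"
    using olinear_lincomb[OF T] by metis
  then have "coord Z (T a) (e i) = (\<Sum>j<n. coord Z a (e j) * coord Z (T (e j)) (e i))"
    by (simp add: coord_lincomb[OF Z enum_in_basis[OF i]])
  then show "coord_vec Z e n (T a) $ i = (matrix_of Z e n T *\<^sub>v coord_vec Z e n a) $ i"
    using i by (simp add: matrix_of_def coord_vec_def scalar_prod_def atLeast0LessThan mult.commute)
qed (simp add: coord_vec_def matrix_of_def)

lemma matrix_of_id: "matrix_of Z e n (\<lambda>a. a) = 1\<^sub>m n"
  by (rule eq_matI) (auto simp: matrix_of_def coord_enum)

lemma matrix_of_pencil: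
  "matrix_of Z e n (\<lambda>a. T0 a + smult \<mu> (T1 a)) = \<mu> \<cdot>\<^sub>m matrix_of Z e n T1 + matrix_of Z e n T0"
  by (rule eq_matI)
     (auto simp: matrix_of_def coord_add[OF Z enum_in_basis] coord_smult[OF Z enum_in_basis])

lemma bij_if_matrix_invertible:
  assumes T: "olinear T" and M': "M' \<in> carrier_mat n n"
    "matrix_of Z e n T * M' = 1\<^sub>m n" "M' * matrix_of Z e n T = 1\<^sub>m n"
  shows "bij T"
proof (rule bijI)
  let ?M = "matrix_of Z e n T" and ?v = "coord_vec Z e n"
  show "inj T"
  proof (rule injI)
    fix a b assume "T a = T b"
    then have "M' *\<^sub>v (?M *\<^sub>v ?v a) = M' *\<^sub>v (?M *\<^sub>v ?v b)"
      by (simp flip: coord_vec_olinear[OF T])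
    then have "?v a = ?v b" using M' by (simp flip: assoc_mult_mat_vec[of M' n n ?M n])
    then show "a = b" by (rule coord_vec_inj)
  qed
  show "surj T"
  proof (rule surjI)
    fix b
    let ?a = "\<Sum>j<n. smult ((M' *\<^sub>v ?v b) $ j) (e j)"
    have "?v ?a = M' *\<^sub>v ?v b" by (rule coord_vec_lincomb) (use M' in simp)
    then have "?v (T ?a) = ?M *\<^sub>v (M' *\<^sub>v ?v b)" by (simp add: coord_vec_olinear[OF T])
    also have "\<dots> = ?v b" using M' by (simp flip: assoc_mult_mat_vec[of ?M n n M' n])
    finally show "T ?a = b" by (rule coord_vec_inj)
  qed
qed

end

end

locale local_oalgebra = oalgebra smult + coefficient_ring m p
  for smult :: "'o::idom \<Rightarrow> 'a::{ring,monoid_mult} \<Rightarrow> 'a" and m :: "'o set" and p :: nat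
begin

lemma generic_bij_pencil:
  assumes Z: "is_obasis smult Z" and e: "bij_betw e {0..<n} Z"
    and T: "olinear T0" "olinear T1"
    and nonzero: "\<exists>i. coeff (det (pencil_mat (matrix_of Z e n T1) (matrix_of Z e n T0))) i \<notin> m"
  shows "generic (\<lambda>\<mu>. bij (\<lambda>a. T0 a + smult \<mu> (T1 a)))"
proof (rule generic_mono[OF generic_invertible_pencil[OF matrix_of_carrier[OF Z e] matrix_of_carrier[OF Z e] nonzero]])
  fix \<mu>
  assume "\<exists>M'. M' \<in> carrier_mat n n \<and>
    (\<mu> \<cdot>\<^sub>m matrix_of Z e n T1 + matrix_of Z e n T0) * M' = 1\<^sub>m n \<and>
    M' * (\<mu> \<cdot>\<^sub>m matrix_of Z e n T1 + matrix_of Z e n T0) = 1\<^sub>m n"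
  then show "bij (\<lambda>a. T0 a + smult \<mu> (T1 a))"
    using bij_if_matrix_invertible[OF Z e olinear_pencil[OF T]] by (auto simp: matrix_of_pencil[OF Z e])
qed

lemma generic_unit_translate:
  assumes Z: "is_obasis smult Z" shows "generic (\<lambda>\<mu>. x + smult \<mu> 1 \<in> unitsA)"
proof -
  define n where "n = card Z"
  obtain e where e: "bij_betw e {0..<n} Z"
    using ex_bij_betw_nat_finite basis_finite[OF Z] unfolding n_def by blast
  let ?L = "matrix_of Z e n ((*) x)"
  have "pencil_mat (matrix_of Z e n (\<lambda>a. a)) ?L = char_poly_matrix (- ?L)"
    by (rule eq_matI) (auto simp: matrix_of_id[OF Z e] pencil_mat_def char_poly_matrix_def)
  then have "coeff (det (pencil_mat (matrix_of Z e n (\<lambda>a. a)) ?L)) n = 1"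
    using degree_monic_char_poly[of "- ?L" n] matrix_of_carrier[OF Z e] by (simp add: char_poly_def)
  then have "\<exists>i. coeff (det (pencil_mat (matrix_of Z e n (\<lambda>a. a)) ?L)) i \<notin> m"
    using one_notin_m by metis
  moreover have "olinear ((*) x)" by (simp add: olinear_def distrib_left smult_mult_right)
  ultimately have "generic (\<lambda>\<mu>. bij (\<lambda>a. x * a + smult \<mu> a))"
    using generic_bij_pencil[OF Z e _ olinear_id] by blast
  then show ?thesis
  proof (rule generic_mono)
    fix \<mu> assume "bij (\<lambda>a. x * a + smult \<mu> a)"
    moreover have "x * a + smult \<mu> a = (x + smult \<mu> 1) * a" for a
      by (simp add: distrib_right smult_one_mult[of \<mu> a])
    ultimately show "x + smult \<mu> 1 \<in> unitsA" by (simp add: unit_if_bij_mult_left)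
  qed
qed

lemma generic_basis_perturbation:
  assumes Z: "is_obasis smult Z" and Ob: "Ob \<subseteq> Z"
  shows "generic (\<lambda>\<mu>. is_obasis smult ((Z - Ob) \<union> (\<lambda>w. w + smult \<mu> (h w)) ` Ob))"
proof -
  define n where "n = card Z"
  obtain e where e: "bij_betw e {0..<n} Z"
    using ex_bij_betw_nat_finite basis_finite[OF Z] unfolding n_def by blast
  define T where "T a = (\<Sum>w\<in>Ob. smult (coord Z a w) (h w))" for a
  have T: "olinear T" unfolding T_def by (rule olinear_coord_combination[OF Z Ob])
  have T_basis: "T y = (if y \<in> Ob then h y else 0)" if "y \<in> Z" for y
    unfolding T_def by (rule coord_combination_basis[OF Z Ob that])
  let ?N = "matrix_of Z e n T"
  have "coeff (det (pencil_mat ?N (matrix_of Z e n (\<lambda>a. a)))) 0 = det (0 \<cdot>\<^sub>m ?N + 1\<^sub>m n)"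
    using poly_det_pencil_mat[of ?N n "matrix_of Z e n (\<lambda>a. a)" 0] matrix_of_carrier[OF Z e]
    by (simp add: poly_0_coeff_0 matrix_of_id[OF Z e])
  also have "0 \<cdot>\<^sub>m ?N + 1\<^sub>m n = 1\<^sub>m n" by (rule eq_matI) auto
  finally have "coeff (det (pencil_mat ?N (matrix_of Z e n (\<lambda>a. a)))) 0 = 1" by simp
  then have "\<exists>i. coeff (det (pencil_mat ?N (matrix_of Z e n (\<lambda>a. a)))) i \<notin> m"
    using one_notin_m by metis
  then have "generic (\<lambda>\<mu>. bij (\<lambda>a. a + smult \<mu> (T a)))"
    by (rule generic_bij_pencil[OF Z e olinear_id T])
  then show ?thesis
  proof (rule generic_mono)
    fix \<mu> assume "bij (\<lambda>a. a + smult \<mu> (T a))"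
    then have "is_obasis smult ((\<lambda>a. a + smult \<mu> (T a)) ` Z)"
      by (rule obasis_image_bij[OF Z olinear_pencil[OF olinear_id T]])
    moreover have "(\<lambda>a. a + smult \<mu> (T a)) ` Z = (Z - Ob) \<union> (\<lambda>w. w + smult \<mu> (h w)) ` Ob"
    proof -
      have "(\<lambda>a. a + smult \<mu> (T a)) ` Z
          = (\<lambda>a. a + smult \<mu> (T a)) ` (Z - Ob) \<union> (\<lambda>a. a + smult \<mu> (T a)) ` Ob"
        using Ob by blast
      also have "(\<lambda>a. a + smult \<mu> (T a)) ` (Z - Ob) = (\<lambda>a. a) ` (Z - Ob)"
        by (rule image_cong) (simp_all add: T_basis)
      also have "(\<lambda>a. a + smult \<mu> (T a)) ` Ob = (\<lambda>w. w + smult \<mu> (h w)) ` Ob"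
        by (rule image_cong) (use Ob T_basis in auto)
      finally show ?thesis by simp
    qed
    ultimately show "is_obasis smult ((Z - Ob) \<union> (\<lambda>w. w + smult \<mu> (h w)) ` Ob)" by simp
  qed
qed

end

section \<open>The \<open>S \<times> S\<close>-action\<close>

lemma unitsA_mult: "a \<in> unitsA \<Longrightarrow> b \<in> unitsA \<Longrightarrow> a * b \<in> unitsA"
proof -
  assume "a \<in> unitsA" "b \<in> unitsA"
  then obtain a' b' where "a * a' = 1" "a' * a = 1" "b * b' = 1" "b' * b = 1"
    unfolding unitsA_def by blast
  then have "(a * b) * (b' * a') = 1" "(b' * a') * (a * b) = 1"
    by (simp_all add: mult.assoc) (simp_all add: mult.assoc[symmetric])
  then show ?thesis unfolding unitsA_def by blast
qed

lemma Delta_subgroup: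
  assumes S: "group S" and P: "subgroup P S" and \<phi>: "\<phi> \<in> hom (S\<lparr>carrier := P\<rparr>) S"
  shows "subgroup (Delta \<phi> P) (S \<times>\<times> S)"
proof -
  interpret \<phi>: group_hom "S\<lparr>carrier := P\<rparr>" S \<phi>
    using subgroup.subgroup_is_group[OF P S] S \<phi> by (simp add: group_hom_def group_hom_axioms_def)
  have P_sub: "P \<subseteq> carrier S" using subgroup.subset[OF P] .
  have \<phi>_inv: "\<phi> (inv\<^bsub>S\<^esub> x) = inv\<^bsub>S\<^esub> (\<phi> x)" if "x \<in> P" for x
    using \<phi>.hom_inv[of x] group.m_inv_consistent[OF S P that] that by simp
  show ?thesis
  proof
    show "Delta \<phi> P \<subseteq> carrier (S \<times>\<times> S)" unfolding Delta_def using P_sub \<phi>.hom_closed by auto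
  next
    fix a b assume "a \<in> Delta \<phi> P" "b \<in> Delta \<phi> P"
    then obtain x y where "x \<in> P" "y \<in> P" "a = (\<phi> x, x)" "b = (\<phi> y, y)" unfolding Delta_def by blast
    moreover have "\<phi> (x \<otimes>\<^bsub>S\<^esub> y) = \<phi> x \<otimes>\<^bsub>S\<^esub> \<phi> y" using \<phi>.hom_mult[of x y] calculation by simp
    ultimately show "a \<otimes>\<^bsub>S \<times>\<times> S\<^esub> b \<in> Delta \<phi> P"
      unfolding Delta_def using subgroup.m_closed[OF P] by force
  next
    show "\<one>\<^bsub>S \<times>\<times> S\<^esub> \<in> Delta \<phi> P"
      unfolding Delta_def using \<phi>.hom_one subgroup.one_closed[OF P] by force
  next
    fix a assume "a \<in> Delta \<phi> P"
    then obtain x where x: "x \<in> P" "a = (\<phi> x, x)" unfolding Delta_def by blast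
    then have "inv\<^bsub>S \<times>\<times> S\<^esub> a = (\<phi> (inv\<^bsub>S\<^esub> x), inv\<^bsub>S\<^esub> x)"
      using \<phi>_inv \<phi>.hom_closed P_sub S by auto
    then show "inv\<^bsub>S \<times>\<times> S\<^esub> a \<in> Delta \<phi> P"
      unfolding Delta_def using subgroup.m_inv_closed[OF P x(1)] by blast
  qed
qed

lemma subgroup_snd_image:
  assumes S: "group S" and U: "subgroup U (S \<times>\<times> S)"
  shows "subgroup (snd ` U) S"
proof
  interpret S: group S by (rule S)
  have U_sub: "U \<subseteq> carrier S \<times> carrier S" using subgroup.subset[OF U] by simp
  show "snd ` U \<subseteq> carrier S" using U_sub by force
  show "x \<otimes>\<^bsub>S\<^esub> y \<in> snd ` U" if "x \<in> snd ` U" "y \<in> snd ` U" for x y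
    using that subgroup.m_closed[OF U] by force
  show "\<one>\<^bsub>S\<^esub> \<in> snd ` U" using subgroup.one_closed[OF U] by force
  show "inv\<^bsub>S\<^esub> x \<in> snd ` U" if x: "x \<in> snd ` U" for x
  proof -
    obtain s where s: "(s, x) \<in> U" using x by force
    then have "inv\<^bsub>S \<times>\<times> S\<^esub> (s, x) = (inv\<^bsub>S\<^esub> s, inv\<^bsub>S\<^esub> x)" using U_sub S by auto
    then show ?thesis using subgroup.m_inv_closed[OF U s] by force
  qed
qed

lemma subgroup_DirProd_coords_determine:
  assumes S: "group S" and U: "subgroup U (S \<times>\<times> S)"
    and left: "\<And>s. (s, \<one>\<^bsub>S\<^esub>) \<in> U \<Longrightarrow> s = \<one>\<^bsub>S\<^esub>"
    and right: "\<And>t. (\<one>\<^bsub>S\<^esub>, t) \<in> U \<Longrightarrow> t = \<one>\<^bsub>S\<^esub>"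
    and st: "(s, t) \<in> U" "(s', t') \<in> U"
  shows "s = s' \<longleftrightarrow> t = t'"
proof -
  interpret S: group S by (rule S)
  have c: "s \<in> carrier S" "t \<in> carrier S" "s' \<in> carrier S" "t' \<in> carrier S"
    using subgroup.subset[OF U] st by auto
  have quotient: "(s \<otimes>\<^bsub>S\<^esub> inv\<^bsub>S\<^esub> s', t \<otimes>\<^bsub>S\<^esub> inv\<^bsub>S\<^esub> t') \<in> U"
    using subgroup.m_closed[OF U st(1) subgroup.m_inv_closed[OF U st(2)]] c S by simp
  have "a \<otimes>\<^bsub>S\<^esub> inv\<^bsub>S\<^esub> b = \<one>\<^bsub>S\<^esub> \<longleftrightarrow> a = b" if "a \<in> carrier S" "b \<in> carrier S" for a b
    using that by (metis S.inv_closed S.inv_equality S.inv_inv S.r_inv)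
  then show ?thesis using quotient left right c by (metis S.r_inv)
qed

lemma subgroup_eq_Delta:
  assumes S: "group S" and U: "subgroup U (S \<times>\<times> S)"
    and left: "\<And>s. (s, \<one>\<^bsub>S\<^esub>) \<in> U \<Longrightarrow> s = \<one>\<^bsub>S\<^esub>"
    and right: "\<And>t. (\<one>\<^bsub>S\<^esub>, t) \<in> U \<Longrightarrow> t = \<one>\<^bsub>S\<^esub>"
  shows "\<exists>P \<phi>. subgroup P S \<and> \<phi> \<in> hom (S\<lparr>carrier := P\<rparr>) S \<and> inj_on \<phi> P \<and> U = Delta \<phi> P"
proof -
  interpret S: group S by (rule S)
  have U_sub: "s \<in> carrier S" "t \<in> carrier S" if "(s, t) \<in> U" for s t
    using subgroup.subset[OF U] that by auto
  have unique_left: "s = s'" if "(s, t) \<in> U" "(s', t) \<in> U" for s s' t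
    using subgroup_DirProd_coords_determine[OF S U left right that] by simp
  have unique_right: "t = t'" if "(s, t) \<in> U" "(s, t') \<in> U" for s t t'
    using subgroup_DirProd_coords_determine[OF S U left right that] by simp
  define P where "P = snd ` U"
  have P: "subgroup P S" unfolding P_def by (rule subgroup_snd_image[OF S U])
  define \<phi> where "\<phi> t = (THE s. (s, t) \<in> U)" for t
  have \<phi>_eq: "\<phi> t = s" if st: "(s, t) \<in> U" for s t
    unfolding \<phi>_def by (rule the_equality) (use st unique_left in blast)+
  have graph: "(\<phi> t, t) \<in> U" if t: "t \<in> P" for t
    using t \<phi>_eq unfolding P_def by force
  have "\<phi> \<in> hom (S\<lparr>carrier := P\<rparr>) S"
  proof (rule homI)
    fix x assume "x \<in> carrier (S\<lparr>carrier := P\<rparr>)"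
    then show "\<phi> x \<in> carrier S" using U_sub(1)[OF graph[of x]] by simp
  next
    fix x y assume "x \<in> carrier (S\<lparr>carrier := P\<rparr>)" "y \<in> carrier (S\<lparr>carrier := P\<rparr>)"
    then have "(\<phi> x \<otimes>\<^bsub>S\<^esub> \<phi> y, x \<otimes>\<^bsub>S\<^esub> y) \<in> U"
      using subgroup.m_closed[OF U graph[of x] graph[of y]] by simp
    then show "\<phi> (x \<otimes>\<^bsub>S\<lparr>carrier := P\<rparr>\<^esub> y) = \<phi> x \<otimes>\<^bsub>S\<^esub> \<phi> y" by (simp add: \<phi>_eq)
  qed
  moreover have "inj_on \<phi> P"
    by (rule inj_onI) (metis graph unique_right)
  moreover have "U = Delta \<phi> P"
    unfolding Delta_def P_def using \<phi>_eq graph[unfolded P_def] by force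
  ultimately show ?thesis using P by blast
qed

locale interior_algebra = local_oalgebra smult m p
  for smult :: "'o::idom \<Rightarrow> 'a::{ring,monoid_mult} \<Rightarrow> 'a" and m :: "'o set" and p :: nat +
  fixes S :: "('g, 'b) monoid_scheme" and \<sigma> :: "'g \<Rightarrow> 'a"
  assumes group: "group S"
    and \<sigma>_one: "\<sigma> \<one>\<^bsub>S\<^esub> = 1"
    and \<sigma>_mult: "\<And>s t. s \<in> carrier S \<Longrightarrow> t \<in> carrier S \<Longrightarrow> \<sigma> (s \<otimes>\<^bsub>S\<^esub> t) = \<sigma> s * \<sigma> t"
begin

abbreviation G where "G \<equiv> S \<times>\<times> S"
abbreviation \<alpha> where "\<alpha> \<equiv> act S \<sigma>"

sublocale S: group S by (rule group)
sublocale G: group G by (rule DirProd_group[OF group group])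

lemma \<sigma>_inv_right: "s \<in> carrier S \<Longrightarrow> \<sigma> s * \<sigma> (inv\<^bsub>S\<^esub> s) = 1"
  using \<sigma>_mult[of s "inv\<^bsub>S\<^esub> s"] \<sigma>_one by simp

lemma \<sigma>_inv_left: "s \<in> carrier S \<Longrightarrow> \<sigma> (inv\<^bsub>S\<^esub> s) * \<sigma> s = 1"
  using \<sigma>_mult[of "inv\<^bsub>S\<^esub> s" s] \<sigma>_one by simp

lemma \<sigma>_unit: "s \<in> carrier S \<Longrightarrow> \<sigma> s \<in> unitsA"
  unfolding unitsA_def using \<sigma>_inv_left \<sigma>_inv_right by blast

lemma act_one: "\<alpha> \<one>\<^bsub>G\<^esub> a = a"
  unfolding act_def by (simp add: \<sigma>_one)

lemma act_mult:
  assumes "u \<in> carrier G" "v \<in> carrier G" shows "\<alpha> (u \<otimes>\<^bsub>G\<^esub> v) a = \<alpha> u (\<alpha> v a)"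
proof -
  obtain s t s' t' where st: "u = (s, t)" "v = (s', t')" by (cases u, cases v)
  then have c: "s \<in> carrier S" "t \<in> carrier S" "s' \<in> carrier S" "t' \<in> carrier S"
    using assms by auto
  then have "inv\<^bsub>S\<^esub> (t \<otimes>\<^bsub>S\<^esub> t') = inv\<^bsub>S\<^esub> t' \<otimes>\<^bsub>S\<^esub> inv\<^bsub>S\<^esub> t" by (simp add: S.inv_mult_group)
  then show ?thesis unfolding act_def st using c by (simp add: \<sigma>_mult mult.assoc)
qed

lemma act_inv: "u \<in> carrier G \<Longrightarrow> \<alpha> (inv\<^bsub>G\<^esub> u) (\<alpha> u a) = a"
  using act_mult[of "inv\<^bsub>G\<^esub> u" u a] G.l_inv G.inv_closed act_one by simp

lemma act_inv': "u \<in> carrier G \<Longrightarrow> \<alpha> u (\<alpha> (inv\<^bsub>G\<^esub> u) a) = a"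
  using act_mult[of u "inv\<^bsub>G\<^esub> u" a] G.r_inv G.inv_closed act_one by simp

lemma act_add: "\<alpha> u (a + b) = \<alpha> u a + \<alpha> u b"
  unfolding act_def by (simp add: distrib_left distrib_right)

lemma act_smult: "\<alpha> u (smult r a) = smult r (\<alpha> u a)"
  unfolding act_def by (simp add: smult_mult_left[symmetric] smult_mult_right[symmetric])

lemma act_olinear: "olinear (\<alpha> u)"
  unfolding olinear_def by (simp add: act_add act_smult)

lemma act_unit:
  assumes "u \<in> carrier G" "a \<in> unitsA" shows "\<alpha> u a \<in> unitsA"
proof -
  have "\<sigma> (fst u) \<in> unitsA" "\<sigma> (inv\<^bsub>S\<^esub> snd u) \<in> unitsA"
    using assms(1) by (auto intro: \<sigma>_unit)
  then show ?thesis unfolding act_def using assms(2) by (intro unitsA_mult)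
qed

lemma act_fixed_iff:
  assumes "t \<in> carrier S" shows "\<alpha> (s, t) a = a \<longleftrightarrow> \<sigma> s * a = a * \<sigma> t"
proof
  assume "\<alpha> (s, t) a = a"
  then have "\<sigma> s * a * \<sigma> (inv\<^bsub>S\<^esub> t) * \<sigma> t = a * \<sigma> t" unfolding act_def by simp
  then show "\<sigma> s * a = a * \<sigma> t" using \<sigma>_inv_left[OF assms] by (simp add: mult.assoc)
next
  assume "\<sigma> s * a = a * \<sigma> t"
  then have "\<sigma> s * a * \<sigma> (inv\<^bsub>S\<^esub> t) = a * (\<sigma> t * \<sigma> (inv\<^bsub>S\<^esub> t))" by (simp add: mult.assoc)
  then show "\<alpha> (s, t) a = a" unfolding act_def using \<sigma>_inv_right[OF assms] by simp
qed

definition act_stable :: "'a set \<Rightarrow> bool" where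
  "act_stable Z \<longleftrightarrow> (\<forall>g\<in>carrier G. \<forall>w\<in>Z. \<alpha> g w \<in> Z)"

lemma SS_invariant_iff_act_stable: "SS_invariant S \<sigma> Z \<longleftrightarrow> act_stable Z"
proof
  assume Z: "SS_invariant S \<sigma> Z"
  show "act_stable Z" unfolding act_stable_def
  proof (intro ballI)
    fix g w assume g: "g \<in> carrier G" and w: "w \<in> Z"
    have "fst g \<in> carrier S" "inv\<^bsub>S\<^esub> snd g \<in> carrier S" using g by (auto simp: mem_Times_iff)
    then have "(\<lambda>y. \<sigma> (fst g) * y) ` Z = Z" "(\<lambda>y. y * \<sigma> (inv\<^bsub>S\<^esub> snd g)) ` Z = Z"
      using Z unfolding SS_invariant_def by blast+
    then have "\<sigma> (fst g) * w * \<sigma> (inv\<^bsub>S\<^esub> snd g) \<in> Z" using w by blast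
    then show "\<alpha> g w \<in> Z" unfolding act_def .
  qed
next
  assume Z: "act_stable Z"
  have left: "\<sigma> s * w \<in> Z" if s: "s \<in> carrier S" and w: "w \<in> Z" for s w
  proof -
    have "\<alpha> (s, \<one>\<^bsub>S\<^esub>) w \<in> Z" using Z s w unfolding act_stable_def by auto
    then show ?thesis unfolding act_def by (simp add: \<sigma>_one)
  qed
  have right: "w * \<sigma> s \<in> Z" if s: "s \<in> carrier S" and w: "w \<in> Z" for s w
  proof -
    have "\<alpha> (\<one>\<^bsub>S\<^esub>, inv\<^bsub>S\<^esub> s) w \<in> Z" using Z s w unfolding act_stable_def by auto
    then show ?thesis unfolding act_def using s by (simp add: \<sigma>_one)
  qed
  show "SS_invariant S \<sigma> Z" unfolding SS_invariant_def
  proof (intro ballI conjI equalityI subsetI)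
    fix s w assume s: "s \<in> carrier S"
    show "w \<in> Z" if "w \<in> (\<lambda>y. \<sigma> s * y) ` Z" using that left[OF s] by blast
    show "w \<in> Z" if "w \<in> (\<lambda>y. y * \<sigma> s) ` Z" using that right[OF s] by blast
    assume w: "w \<in> Z"
    have "w = \<sigma> s * (\<sigma> (inv\<^bsub>S\<^esub> s) * w)"
      using \<sigma>_inv_right[OF s] by (simp add: mult.assoc[symmetric])
    then show "w \<in> (\<lambda>y. \<sigma> s * y) ` Z" using left[OF S.inv_closed[OF s] w] by blast
    have "w = (w * \<sigma> (inv\<^bsub>S\<^esub> s)) * \<sigma> s"
      using \<sigma>_inv_left[OF s] by (simp add: mult.assoc)
    then show "w \<in> (\<lambda>y. y * \<sigma> s) ` Z" using right[OF S.inv_closed[OF s] w] by blast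
  qed
qed

lemma act_bij_betw:
  assumes Z: "act_stable Z" and u: "u \<in> carrier G" shows "bij_betw (\<alpha> u) Z Z"
proof (rule bij_betw_byWitness[where f' = "\<alpha> (inv\<^bsub>G\<^esub> u)"])
  show "\<forall>a\<in>Z. \<alpha> (inv\<^bsub>G\<^esub> u) (\<alpha> u a) = a" using act_inv[OF u] by blast
  show "\<forall>a\<in>Z. \<alpha> u (\<alpha> (inv\<^bsub>G\<^esub> u) a) = a" using act_inv'[OF u] by blast
  show "\<alpha> u ` Z \<subseteq> Z" using Z u unfolding act_stable_def by blast
  show "\<alpha> (inv\<^bsub>G\<^esub> u) ` Z \<subseteq> Z" using Z G.inv_closed[OF u] unfolding act_stable_def by blast
qed

lemma coord_act:
  assumes Z: "is_obasis smult Z" "act_stable Z" and u: "u \<in> carrier G" and w: "w \<in> Z"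
  shows "coord Z (\<alpha> u a) w = coord Z a (\<alpha> (inv\<^bsub>G\<^esub> u) w)"
proof -
  have "\<alpha> u a = \<alpha> u (\<Sum>y\<in>Z. smult (coord Z a y) y)"
    using coord_expansion[OF Z(1), of a] by (rule arg_cong)
  also have "\<dots> = (\<Sum>y\<in>Z. smult (coord Z a y) (\<alpha> u y))"
    by (rule olinear_lincomb[OF act_olinear])
  also have "\<dots> = (\<Sum>y\<in>Z. smult (coord Z a (\<alpha> (inv\<^bsub>G\<^esub> u) (\<alpha> u y))) (\<alpha> u y))"
    using act_inv[OF u] by simp
  also have "\<dots> = (\<Sum>y\<in>Z. smult (coord Z a (\<alpha> (inv\<^bsub>G\<^esub> u) y)) y)"
    by (rule sum.reindex_bij_betw[OF act_bij_betw[OF Z(2) u]])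
  finally show ?thesis by (rule coord_unique[OF Z(1) _ w])
qed

definition stab :: "('g \<times> 'g) set \<Rightarrow> 'a \<Rightarrow> ('g \<times> 'g) set" where
  "stab U y = {g \<in> U. \<alpha> g y = y}"

definition orbit :: "('g \<times> 'g) set \<Rightarrow> 'a \<Rightarrow> 'a set" where
  "orbit U y = (\<lambda>g. \<alpha> g y) ` U"

lemma stab_subgroup:
  assumes U: "subgroup U G" shows "subgroup (stab U y) G"
proof
  show "stab U y \<subseteq> carrier G" using subgroup.subset[OF U] unfolding stab_def by auto
next
  fix g h assume "g \<in> stab U y" "h \<in> stab U y"
  then have "g \<in> U" "h \<in> U" "\<alpha> g y = y" "\<alpha> h y = y" unfolding stab_def by auto
  moreover have "\<alpha> (g \<otimes>\<^bsub>G\<^esub> h) y = \<alpha> g (\<alpha> h y)"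
    using calculation subgroup.subset[OF U] by (intro act_mult) auto
  ultimately show "g \<otimes>\<^bsub>G\<^esub> h \<in> stab U y"
    using subgroup.m_closed[OF U] unfolding stab_def by simp
next
  show "\<one>\<^bsub>G\<^esub> \<in> stab U y"
    using subgroup.one_closed[OF U] act_one unfolding stab_def by (simp del: one_DirProd)
next
  fix g assume g: "g \<in> stab U y"
  then have "g \<in> carrier G" using subgroup.subset[OF U] unfolding stab_def by auto
  then have "\<alpha> (inv\<^bsub>G\<^esub> g) y = y" using act_inv[of g y] g unfolding stab_def by simp
  then show "inv\<^bsub>G\<^esub> g \<in> stab U y"
    using subgroup.m_inv_closed[OF U] g unfolding stab_def by (simp del: carrier_DirProd)
qed

lemma orbit_self: "subgroup U G \<Longrightarrow> y \<in> orbit U y"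
  unfolding orbit_def using act_one subgroup.one_closed by (metis image_eqI)

lemma orbit_eq:
  assumes U: "subgroup U G" and x: "x \<in> orbit U y" shows "orbit U x = orbit U y"
proof -
  obtain g where g: "g \<in> U" "x = \<alpha> g y" using x unfolding orbit_def by blast
  have gc: "g \<in> carrier G" and gi: "inv\<^bsub>G\<^esub> g \<in> U" using g U subgroup.subset[OF U]
    by (auto simp del: carrier_DirProd intro: subgroup.m_inv_closed)
  have "\<alpha> h x = \<alpha> (h \<otimes>\<^bsub>G\<^esub> g) y" "\<alpha> h y = \<alpha> (h \<otimes>\<^bsub>G\<^esub> inv\<^bsub>G\<^esub> g) x" if h: "h \<in> U" for h
  proof -
    have hc: "h \<in> carrier G" using h subgroup.subset[OF U] by blast
    show "\<alpha> h x = \<alpha> (h \<otimes>\<^bsub>G\<^esub> g) y" using act_mult[OF hc gc] g by simp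
    show "\<alpha> h y = \<alpha> (h \<otimes>\<^bsub>G\<^esub> inv\<^bsub>G\<^esub> g) x"
      using act_mult[OF hc G.inv_closed[OF gc]] act_inv[OF gc] g by simp
  qed
  then show ?thesis unfolding orbit_def
    using g(1) gi subgroup.m_closed[OF U] by blast
qed

end

section \<open>Brauer quotients of permutation bases\<close>

context interior_algebra
begin

definition cosets :: "('g \<times> 'g) set \<Rightarrow> ('g \<times> 'g) set \<Rightarrow> ('g \<times> 'g) set set" where
  "cosets U V = (\<lambda>u. u <#\<^bsub>G\<^esub> V) ` U"

lemma trace_cosets: "trace S \<sigma> U V a = (\<Sum>C\<in>cosets U V. \<alpha> (SOME u. u \<in> C) a)"
  unfolding trace_def cosets_def ..

lemma coset_rep:
  assumes U: "subgroup U G" and V: "subgroup V G" "V \<subseteq> U" and u: "u \<in> U"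
  obtains v where "v \<in> V" "(SOME x. x \<in> u <#\<^bsub>G\<^esub> V) = u \<otimes>\<^bsub>G\<^esub> v"
proof -
  have "u \<in> u <#\<^bsub>G\<^esub> V" using G.lcos_self[OF _ V(1)] u subgroup.subset[OF U] by blast
  then have "(SOME x. x \<in> u <#\<^bsub>G\<^esub> V) \<in> u <#\<^bsub>G\<^esub> V" by (rule someI)
  then show ?thesis using that unfolding l_coset_def by blast
qed

lemma trace_stab_eq_orbit_sum:
  assumes U: "subgroup U G"
  shows "trace S \<sigma> U (stab U y) y = (\<Sum>w\<in>orbit U y. w)"
proof -
  define V where "V = stab U y"
  have V: "subgroup V G" "V \<subseteq> U" unfolding V_def using stab_subgroup[OF U] by (auto simp: stab_def)
  have UG: "U \<subseteq> carrier G" using subgroup.subset[OF U] .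
  define \<Phi> where "\<Phi> C = \<alpha> (SOME x. x \<in> C) y" for C
  have \<Phi>_coset: "\<Phi> (u <#\<^bsub>G\<^esub> V) = \<alpha> u y" if u: "u \<in> U" for u
  proof -
    obtain v where v: "v \<in> V" "(SOME x. x \<in> u <#\<^bsub>G\<^esub> V) = u \<otimes>\<^bsub>G\<^esub> v"
      using coset_rep[OF U V u] .
    have "\<alpha> v y = y" using v unfolding V_def stab_def by blast
    moreover have "u \<in> carrier G" "v \<in> carrier G" using u v(1) V(2) UG by auto
    ultimately show ?thesis unfolding \<Phi>_def v(2) using act_mult by simp
  qed
  have "bij_betw \<Phi> (cosets U V) (orbit U y)"
  proof (rule bij_betw_imageI)
    show "inj_on \<Phi> (cosets U V)"
    proof (rule inj_onI)
      fix C1 C2 assume "C1 \<in> cosets U V" "C2 \<in> cosets U V" and eq: "\<Phi> C1 = \<Phi> C2"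
      then obtain u1 u2 where u: "u1 \<in> U" "u2 \<in> U" "C1 = u1 <#\<^bsub>G\<^esub> V" "C2 = u2 <#\<^bsub>G\<^esub> V"
        unfolding cosets_def by blast
      then have uc: "u1 \<in> carrier G" "u2 \<in> carrier G" using UG by auto
      define w where "w = inv\<^bsub>G\<^esub> u2 \<otimes>\<^bsub>G\<^esub> u1"
      have "\<alpha> w y = \<alpha> (inv\<^bsub>G\<^esub> u2) (\<alpha> u1 y)" unfolding w_def by (rule act_mult[OF G.inv_closed uc(1)]) fact
      also have "\<dots> = y" using eq \<Phi>_coset u act_inv[OF uc(2)] by simp
      finally have "w \<in> V"
        using u U unfolding w_def V_def stab_def by (simp add: subgroup.m_closed subgroup.m_inv_closed del: carrier_DirProd)
      moreover have "u1 = u2 \<otimes>\<^bsub>G\<^esub> w"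
        using uc unfolding w_def by (metis G.inv_closed G.inv_solve_left G.m_closed)
      ultimately have "u1 \<in> u2 <#\<^bsub>G\<^esub> V" unfolding l_coset_def by blast
      then show "C1 = C2" using u uc V(1) by (metis G.l_repr_independence)
    qed
    show "\<Phi> ` cosets U V = orbit U y"
      unfolding cosets_def orbit_def image_image using \<Phi>_coset by (auto intro!: image_cong)
  qed
  then have "(\<Sum>C\<in>cosets U V. \<Phi> C) = (\<Sum>w\<in>orbit U y. w)" by (rule sum.reindex_bij_betw)
  then show ?thesis unfolding trace_cosets \<Phi>_def V_def .
qed

lemma coord_fixed_const_on_orbit:
  assumes Y: "is_obasis smult Y" "act_stable Y" and U: "subgroup U G"
    and a: "a \<in> fixpts S \<sigma> U" and g: "g \<in> U" and y: "y \<in> Y"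
  shows "coord Y a (\<alpha> g y) = coord Y a y"
proof -
  have gc: "g \<in> carrier G" using g subgroup.subset[OF U] by blast
  have "\<alpha> (inv\<^bsub>G\<^esub> g) a = a"
    using a subgroup.m_inv_closed[OF U g] unfolding fixpts_def by (auto simp del: carrier_DirProd)
  then have "coord Y a y = coord Y a (\<alpha> (inv\<^bsub>G\<^esub> (inv\<^bsub>G\<^esub> g)) y)"
    using coord_act[OF Y G.inv_closed[OF gc] y, of a] by simp
  then show ?thesis using G.inv_inv[OF gc] by simp
qed

text \<open>If no element of the permutation basis \<open>Y\<close> is fixed by \<open>U\<close>, then grouping the expansion
  of a \<open>U\<close>-fixed element along the \<open>U\<close>-orbits of \<open>Y\<close> writes it as a combination of traces
  from the (proper) stabilisers, so \<open>A(U) = 0\<close>.\<close>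

lemma fixed_basis_element_if_brauer_nonzero:
  assumes Y: "is_obasis smult Y" "act_stable Y" and U: "subgroup U G"
    and nonzero: "brauer_nonzero smult m S \<sigma> U"
  shows "\<exists>y\<in>Y. \<forall>g\<in>U. \<alpha> g y = y"
proof (rule ccontr)
  assume "\<not> (\<exists>y\<in>Y. \<forall>g\<in>U. \<alpha> g y = y)"
  then have proper: "stab U y \<subset> U" if "y \<in> Y" for y using that unfolding stab_def by blast
  define X where "X = {smult r a | r a. r \<in> m \<and> a \<in> fixpts S \<sigma> U} \<union>
    (\<Union>V\<in>{V. subgroup V G \<and> V \<subset> U}. trace S \<sigma> U V ` fixpts S \<sigma> V)"
  have "a \<in> ospan smult X" if a: "a \<in> fixpts S \<sigma> U" for a
  proof -
    have "a = (\<Sum>y\<in>Y. smult (coord Y a y) y)" by (rule coord_expansion[OF Y(1)])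
    also have "\<dots> = (\<Sum>Q\<in>orbit U ` Y. \<Sum>x\<in>{x \<in> Y. orbit U x = Q}. smult (coord Y a x) x)"
      by (rule sum.image_gen[OF basis_finite[OF Y(1)]])
    also have "\<dots> \<in> ospan smult X"
    proof (rule ospan_sum)
      fix Q assume "Q \<in> orbit U ` Y"
      then obtain y where y: "y \<in> Y" "Q = orbit U y" by blast
      have orbit_sub: "orbit U y \<subseteq> Y"
        using Y(2) y(1) subgroup.subset[OF U] unfolding orbit_def act_stable_def by blast
      have "{x \<in> Y. orbit U x = Q} = orbit U y"
        using orbit_self[OF U] orbit_eq[OF U] orbit_sub y by blast
      moreover have "(\<Sum>x\<in>orbit U y. smult (coord Y a x) x) = smult (coord Y a y) (trace S \<sigma> U (stab U y) y)"
        unfolding trace_stab_eq_orbit_sum[OF U] smult_sum_right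
        by (rule sum.cong) (auto simp: orbit_def coord_fixed_const_on_orbit[OF Y U a _ y(1)])
      moreover have "trace S \<sigma> U (stab U y) y \<in> X"
        using stab_subgroup[OF U] proper[OF y(1)] unfolding X_def fixpts_def stab_def by blast
      ultimately show "(\<Sum>x\<in>{x \<in> Y. orbit U x = Q}. smult (coord Y a x) x) \<in> ospan smult X"
        by (simp add: ospan_smult ospan_base)
    qed
    finally show ?thesis .
  qed
  then show False using nonzero unfolding brauer_nonzero_def X_def[symmetric] by blast
qed

lemma coset_rep_in:
  assumes U: "subgroup U G" and V: "subgroup V G" "V \<subseteq> U" and C: "C \<in> cosets U V"
  shows "(SOME x. x \<in> C) \<in> U"
proof -
  obtain u where u: "u \<in> U" "C = u <#\<^bsub>G\<^esub> V" using C unfolding cosets_def by blast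
  then obtain v where v: "v \<in> V" "(SOME x. x \<in> C) = u \<otimes>\<^bsub>G\<^esub> v" using coset_rep[OF U V] by metis
  then have "v \<in> U" using V(2) by blast
  then show ?thesis using subgroup.m_closed[OF U u(1)] v(2) by simp
qed

lemma coord_trace_fixed:
  assumes Y: "is_obasis smult Y" "act_stable Y" and U: "subgroup U G" and V: "subgroup V G" "V \<subseteq> U"
    and y: "y \<in> Y" and fixed: "\<forall>g\<in>U. \<alpha> g y = y"
  shows "coord Y (trace S \<sigma> U V a) y = of_nat (card (cosets U V)) * coord Y a y"
proof -
  have "coord Y (\<alpha> (SOME u. u \<in> C) a) y = coord Y a y" if C: "C \<in> cosets U V" for C
  proof -
    have r: "(SOME u. u \<in> C) \<in> U" by (rule coset_rep_in[OF U V C])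
    then have "\<alpha> (inv\<^bsub>G\<^esub> (SOME u. u \<in> C)) y = y"
      using fixed subgroup.m_inv_closed[OF U r] by (simp del: carrier_DirProd)
    then show ?thesis using coord_act[OF Y _ y, of "SOME u. u \<in> C" a] r subgroup.subset[OF U] by auto
  qed
  then show ?thesis unfolding trace_cosets coord_sum[OF Y(1) y] by simp
qed

end

locale interior_p_algebra = interior_algebra +
  assumes finite_S: "finite (carrier S)" and p_group: "\<exists>n. card (carrier S) = p ^ n"
begin

lemma card_subgroup_p_power:
  assumes U: "subgroup U G" shows "\<exists>k. card U = p ^ k"
proof -
  obtain n where n: "card (carrier S) = p ^ n" using p_group by blast
  have "card (rcosets\<^bsub>G\<^esub> U) * card U = Coset.order G" by (rule G.lagrange[OF U])
  also have "Coset.order G = p ^ (n + n)" unfolding Coset.order_def using n by (simp add: card_cartesian_product power_add)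
  finally have "card U dvd p ^ (n + n)" by (metis dvd_triv_right)
  then show ?thesis using divides_primepow_nat[OF p_prime] by blast
qed

lemma p_dvd_card_cosets:
  assumes U: "subgroup U G" and V: "subgroup V G" "V \<subset> U"
  shows "p dvd card (cosets U V)"
proof -
  define K where "K = G\<lparr>carrier := U\<rparr>"
  interpret K: group K unfolding K_def by (rule subgroup.subgroup_is_group[OF U G.is_group])
  have finite_U: "finite U" using finite_S subgroup.subset[OF U] finite_subset by fastforce
  have "subgroup V K" unfolding K_def using G.subgroup_incl[OF V(1) U] V(2) by auto
  then have "card (lcosets\<^bsub>K\<^esub> V) * card V = Coset.order K"
    by (intro K.l_lagrange) (simp_all add: K_def finite_U)
  moreover have "lcosets\<^bsub>K\<^esub> V = cosets U V" unfolding LCOSETS_def cosets_def K_def by auto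
  moreover have "Coset.order K = card U" unfolding Coset.order_def K_def by simp
  ultimately have index: "card (cosets U V) * card V = card U" by simp
  obtain a b where a: "card U = p ^ a" and b: "card V = p ^ b"
    using card_subgroup_p_power[OF U] card_subgroup_p_power[OF V(1)] by blast
  have "b < a" using psubset_card_mono[OF finite_U V(2)] a b p_prime
    by (metis prime_gt_1_nat power_less_imp_less_exp)
  then have "card (cosets U V) * p ^ b = p ^ (a - b) * p ^ b"
    using index a b by (simp add: power_add[symmetric])
  then have "card (cosets U V) = p ^ (a - b)" using p_prime by (simp add: prime_gt_0_nat)
  then show ?thesis using \<open>b < a\<close> by simp
qed

text \<open>The coordinate at a \<open>U\<close>-fixed basis element vanishes modulo \<open>m\<close> on \<open>m A^U\<close> and, since
  \<open>p \<in> m\<close> divides every index \<open>|U : V|\<close>, on all relative traces from proper subgroups.\<close>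

lemma brauer_nonzero_if_fixed_basis_element:
  assumes Y: "is_obasis smult Y" "act_stable Y" and U: "subgroup U G"
    and y: "y \<in> Y" and fixed: "\<forall>g\<in>U. \<alpha> g y = y"
  shows "brauer_nonzero smult m S \<sigma> U"
proof -
  define X where "X = {smult r a | r a. r \<in> m \<and> a \<in> fixpts S \<sigma> U} \<union>
    (\<Union>V\<in>{V. subgroup V G \<and> V \<subset> U}. trace S \<sigma> U V ` fixpts S \<sigma> V)"
  have X_coord: "coord Y b y \<in> m" if "b \<in> X" for b
    using that unfolding X_def
  proof (elim UnE)
    assume "b \<in> {smult r a | r a. r \<in> m \<and> a \<in> fixpts S \<sigma> U}"
    then obtain r a where "r \<in> m" "b = smult r a" by blast
    then show ?thesis using coord_smult[OF Y(1) y] m_mult_right by simp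
  next
    assume "b \<in> (\<Union>V\<in>{V. subgroup V G \<and> V \<subset> U}. trace S \<sigma> U V ` fixpts S \<sigma> V)"
    then obtain V where V: "subgroup V G" "V \<subset> U" and "b \<in> trace S \<sigma> U V ` fixpts S \<sigma> V" by auto
    then obtain a where b: "b = trace S \<sigma> U V a" by (elim imageE)
    have "of_nat (card (cosets U V)) * coord Y a y \<in> m"
      by (rule m_mult_right[OF of_nat_in_m_if_dvd[OF p_dvd_card_cosets[OF U V]]])
    then show ?thesis using coord_trace_fixed[OF Y U V(1) psubset_imp_subset[OF V(2)] y fixed] b by simp
  qed
  have "coord Y b y \<in> m" if b: "b \<in> ospan smult X" for b
  proof -
    obtain F c where F: "finite F" "F \<subseteq> X" "b = (\<Sum>x\<in>F. smult (c x) x)"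
      using b unfolding ospan_def by blast
    then have "coord Y b y = (\<Sum>x\<in>F. c x * coord Y x y)" by (simp add: coord_lincomb[OF Y(1) y])
    also have "\<dots> \<in> m" using F(2) X_coord m_mult_left by (intro m_sum) blast
    finally show ?thesis .
  qed
  moreover have "coord Y y y \<notin> m" using coord_basis[OF Y(1) y y] one_notin_m by simp
  ultimately have "y \<notin> ospan smult X" by blast
  moreover have "y \<in> fixpts S \<sigma> U" unfolding fixpts_def using fixed by blast
  ultimately show ?thesis unfolding brauer_nonzero_def X_def[symmetric] by blast
qed

end

section \<open>Replacing an orbit by units\<close>

context interior_algebra
begin

lemma stab_eq_Delta:
  assumes left_free: "\<And>s. s \<in> carrier S \<Longrightarrow> \<sigma> s * y = y \<Longrightarrow> s = \<one>\<^bsub>S\<^esub>"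
    and right_free: "\<And>s. s \<in> carrier S \<Longrightarrow> y * \<sigma> s = y \<Longrightarrow> s = \<one>\<^bsub>S\<^esub>"
  shows "\<exists>P \<phi>. subgroup P S \<and> \<phi> \<in> hom (S\<lparr>carrier := P\<rparr>) S \<and> inj_on \<phi> P \<and>
           stab (carrier G) y = Delta \<phi> P"
proof (rule subgroup_eq_Delta[OF group stab_subgroup[OF G.subgroup_self]])
  fix s assume "(s, \<one>\<^bsub>S\<^esub>) \<in> stab (carrier G) y"
  then have "s \<in> carrier S" "\<sigma> s * y = y"
    unfolding stab_def using act_fixed_iff[of "\<one>\<^bsub>S\<^esub>" s y] by (auto simp: \<sigma>_one)
  then show "s = \<one>\<^bsub>S\<^esub>" by (rule left_free)
next
  fix t assume "(\<one>\<^bsub>S\<^esub>, t) \<in> stab (carrier G) y"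
  then have "t \<in> carrier S" "y * \<sigma> t = y"
    unfolding stab_def using act_fixed_iff[of t "\<one>\<^bsub>S\<^esub>" y] by (auto simp: \<sigma>_one)
  then show "t = \<one>\<^bsub>S\<^esub>" by (rule right_free)
qed

lemma twfix_iff_fixed_Delta:
  assumes "P \<subseteq> carrier S"
  shows "a \<in> twfix S \<sigma> \<phi> P \<longleftrightarrow> (\<forall>g\<in>Delta \<phi> P. \<alpha> g a = a)"
  unfolding twfix_def Delta_def using assms by (auto simp: act_fixed_iff subsetD)

lemma twisted_unit_if_unit_basis:
  assumes Y: "is_obasis smult Y" "act_stable Y" "Y \<subseteq> unitsA"
    and P: "subgroup P S" and \<phi>: "\<phi> \<in> fusion_hom smult m S \<sigma> P"
  shows "unitsA \<inter> twfix S \<sigma> \<phi> P \<noteq> {}"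
proof -
  have "subgroup (Delta \<phi> P) G"
    using Delta_subgroup[OF group P] \<phi> unfolding fusion_hom_def by blast
  moreover have "brauer_nonzero smult m S \<sigma> (Delta \<phi> P)"
    using \<phi> unfolding fusion_hom_def by blast
  ultimately obtain y where "y \<in> Y" "\<forall>g\<in>Delta \<phi> P. \<alpha> g y = y"
    using fixed_basis_element_if_brauer_nonzero[OF Y(1,2)] by blast
  then show ?thesis using Y(3) twfix_iff_fixed_Delta[OF subgroup.subset[OF P]] by blast
qed

lemma act_orbit_iff:
  assumes g: "g \<in> carrier G"
  shows "\<alpha> g w \<in> orbit (carrier G) y \<longleftrightarrow> w \<in> orbit (carrier G) y"
proof
  assume "\<alpha> g w \<in> orbit (carrier G) y"
  then obtain g' where g': "g' \<in> carrier G" "\<alpha> g w = \<alpha> g' y" unfolding orbit_def by blast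
  then have "w = \<alpha> (inv\<^bsub>G\<^esub> g \<otimes>\<^bsub>G\<^esub> g') y" using act_inv[OF g, of w] act_mult[OF G.inv_closed[OF g]] by simp
  then show "w \<in> orbit (carrier G) y" unfolding orbit_def using g g' by blast
next
  assume "w \<in> orbit (carrier G) y"
  then obtain g' where g': "g' \<in> carrier G" "w = \<alpha> g' y" unfolding orbit_def by blast
  then have "\<alpha> g w = \<alpha> (g \<otimes>\<^bsub>G\<^esub> g') y" using act_mult[OF g] by simp
  then show "\<alpha> g w \<in> orbit (carrier G) y" unfolding orbit_def using g g' by blast
qed

lemma act_eq_if_act_eq_on_stab:
  assumes u: "\<forall>g\<in>stab (carrier G) y. \<alpha> g u = u" and g: "g \<in> carrier G" "g' \<in> carrier G"
    and eq: "\<alpha> g y = \<alpha> g' y"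
  shows "\<alpha> g u = \<alpha> g' u"
proof -
  have "\<alpha> (inv\<^bsub>G\<^esub> g \<otimes>\<^bsub>G\<^esub> g') y = y"
    using act_mult[OF G.inv_closed[OF g(1)] g(2)] act_inv[OF g(1)] eq[symmetric] by simp
  then have "inv\<^bsub>G\<^esub> g \<otimes>\<^bsub>G\<^esub> g' \<in> stab (carrier G) y"
    unfolding stab_def using G.m_closed[OF G.inv_closed[OF g(1)] g(2)] by blast
  then have "\<alpha> (inv\<^bsub>G\<^esub> g \<otimes>\<^bsub>G\<^esub> g') u = u" using u by blast
  then have "\<alpha> g (\<alpha> (inv\<^bsub>G\<^esub> g) (\<alpha> g' u)) = \<alpha> g u"
    using act_mult[OF G.inv_closed[OF g(1)] g(2)] by simp
  then show ?thesis using act_inv'[OF g(1)] by simp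
qed

lemma orbit_transport:
  assumes u: "\<forall>g\<in>stab (carrier G) y. \<alpha> g u = u"
  obtains h where "\<And>g. g \<in> carrier G \<Longrightarrow> h (\<alpha> g y) = \<alpha> g u"
proof
  fix g assume g: "g \<in> carrier G"
  let ?g = "SOME g'. g' \<in> carrier G \<and> \<alpha> g' y = \<alpha> g y"
  have "?g \<in> carrier G \<and> \<alpha> ?g y = \<alpha> g y" by (rule someI[of _ g]) (use g in simp)
  then show "\<alpha> ?g u = \<alpha> g u" using act_eq_if_act_eq_on_stab[OF u _ g] by blast
qed

lemma act_stable_replace_orbit:
  assumes Z: "act_stable Z" and f: "\<And>g. g \<in> carrier G \<Longrightarrow> f (\<alpha> g y) = \<alpha> g z"
  shows "act_stable ((Z - orbit (carrier G) y) \<union> f ` orbit (carrier G) y)"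
  unfolding act_stable_def
proof (intro ballI)
  fix g w assume g: "g \<in> carrier G" and w: "w \<in> (Z - orbit (carrier G) y) \<union> f ` orbit (carrier G) y"
  show "\<alpha> g w \<in> (Z - orbit (carrier G) y) \<union> f ` orbit (carrier G) y"
  proof (cases "w \<in> Z - orbit (carrier G) y")
    case True
    then have "\<alpha> g w \<in> Z" using Z g unfolding act_stable_def by blast
    moreover have "\<alpha> g w \<notin> orbit (carrier G) y" using True act_orbit_iff[OF g] by blast
    ultimately show ?thesis by blast
  next
    case False
    then obtain g' where g': "g' \<in> carrier G" "w = f (\<alpha> g' y)"
      using w unfolding orbit_def by blast
    then have "\<alpha> g w = \<alpha> (g \<otimes>\<^bsub>G\<^esub> g') z" using act_mult[OF g g'(1)] f[OF g'(1)] by simp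
    also have "\<dots> = f (\<alpha> (g \<otimes>\<^bsub>G\<^esub> g') y)" using f[OF G.m_closed[OF g g'(1)]] by simp
    finally show ?thesis unfolding orbit_def using g g' by blast
  qed
qed

lemma orbit_replacement:
  assumes Z: "is_obasis smult Z" "act_stable Z" and y: "y \<in> Z"
    and u: "u \<in> unitsA" "\<forall>g\<in>stab (carrier G) y. \<alpha> g u = u"
  shows "\<exists>Z'. is_obasis smult Z' \<and> act_stable Z' \<and> Z' - unitsA \<subseteq> Z - unitsA - {y}"
proof -
  define Ob where "Ob = orbit (carrier G) y"
  have Ob_sub: "Ob \<subseteq> Z" using Z(2) y unfolding Ob_def orbit_def act_stable_def by blast
  obtain h where h: "\<And>g. g \<in> carrier G \<Longrightarrow> h (\<alpha> g y) = \<alpha> g u"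
    using orbit_transport[OF u(2)] by blast
  obtain u' where u': "u' * u = 1" using u(1) unfolding unitsA_def by blast
  obtain \<mu> where \<mu>: "y * u' + smult \<mu> 1 \<in> unitsA"
      "is_obasis smult ((Z - Ob) \<union> (\<lambda>w. w + smult \<mu> (h w)) ` Ob)"
    using generic_obtain[OF generic_conj[OF generic_unit_translate[OF Z(1)]
          generic_basis_perturbation[OF Z(1) Ob_sub]]] by blast
  define z where "z = y + smult \<mu> u"
  have "z = (y * u' + smult \<mu> 1) * u"
    unfolding z_def using u' by (simp add: distrib_right mult.assoc smult_one_mult[of \<mu> u])
  then have z: "z \<in> unitsA" using \<mu>(1) u(1) unitsA_mult by simp
  define f where "f w = w + smult \<mu> (h w)" for w
  have f: "f (\<alpha> g y) = \<alpha> g z" if "g \<in> carrier G" for g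
    unfolding f_def z_def using h[OF that] by (simp add: act_add act_smult)
  have "f ` Ob \<subseteq> unitsA" unfolding Ob_def orbit_def using f act_unit[OF _ z] by auto
  moreover have "y \<in> Ob" unfolding Ob_def by (rule orbit_self[OF G.subgroup_self])
  ultimately have "(Z - Ob) \<union> f ` Ob - unitsA \<subseteq> Z - unitsA - {y}" by blast
  moreover have "act_stable ((Z - Ob) \<union> f ` Ob)"
    unfolding Ob_def by (rule act_stable_replace_orbit[OF Z(2) f])
  moreover have "is_obasis smult ((Z - Ob) \<union> f ` Ob)" using \<mu>(2) unfolding f_def .
  ultimately show ?thesis by blast
qed

end

context interior_p_algebra
begin

lemma stab_fixes_twisted_unit:
  assumes Z: "is_obasis smult Z" "act_stable Z" and y: "y \<in> Z"
    and left_free: "\<And>s. s \<in> carrier S \<Longrightarrow> \<sigma> s * y = y \<Longrightarrow> s = \<one>\<^bsub>S\<^esub>"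
    and right_free: "\<And>s. s \<in> carrier S \<Longrightarrow> y * \<sigma> s = y \<Longrightarrow> s = \<one>\<^bsub>S\<^esub>"
    and twisted_units: "\<forall>P \<phi>. subgroup P S \<longrightarrow> \<phi> \<in> fusion_hom smult m S \<sigma> P \<longrightarrow>
      unitsA \<inter> twfix S \<sigma> \<phi> P \<noteq> {}"
  shows "\<exists>u\<in>unitsA. \<forall>g\<in>stab (carrier G) y. \<alpha> g u = u"
proof -
  obtain P \<phi> where P: "subgroup P S" and \<phi>: "\<phi> \<in> hom (S\<lparr>carrier := P\<rparr>) S" "inj_on \<phi> P"
    and stab: "stab (carrier G) y = Delta \<phi> P"
    using stab_eq_Delta[OF left_free right_free] by blast
  have "\<forall>g\<in>stab (carrier G) y. \<alpha> g y = y" unfolding stab_def by blast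
  then have "brauer_nonzero smult m S \<sigma> (stab (carrier G) y)"
    by (rule brauer_nonzero_if_fixed_basis_element[OF Z stab_subgroup[OF G.subgroup_self] y])
  then have "brauer_nonzero smult m S \<sigma> (Delta \<phi> P)" unfolding stab .
  then have "\<phi> \<in> fusion_hom smult m S \<sigma> P" unfolding fusion_hom_def using \<phi> by blast
  then obtain u where "u \<in> unitsA" "u \<in> twfix S \<sigma> \<phi> P" using twisted_units P by blast
  then show ?thesis unfolding stab using twfix_iff_fixed_Delta[OF subgroup.subset[OF P]] by blast
qed

lemma unit_basis_if_twisted_units:
  assumes Y: "is_obasis smult Y" "act_stable Y"
    and left_free: "\<forall>s\<in>carrier S. \<forall>y\<in>Y. \<sigma> s * y = y \<longrightarrow> s = \<one>\<^bsub>S\<^esub>"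
    and right_free: "\<forall>s\<in>carrier S. \<forall>y\<in>Y. y * \<sigma> s = y \<longrightarrow> s = \<one>\<^bsub>S\<^esub>"
    and twisted_units: "\<forall>P \<phi>. subgroup P S \<longrightarrow> \<phi> \<in> fusion_hom smult m S \<sigma> P \<longrightarrow>
      unitsA \<inter> twfix S \<sigma> \<phi> P \<noteq> {}"
  shows "\<exists>Z. is_obasis smult Z \<and> act_stable Z \<and> Z \<subseteq> unitsA"
proof -
  have "\<exists>Z. is_obasis smult Z \<and> act_stable Z \<and> Z \<subseteq> unitsA"
    if "card (Z - unitsA) = k" "is_obasis smult Z" "act_stable Z" "Z - unitsA \<subseteq> Y" for k Z
    using that
  proof (induction k arbitrary: Z rule: less_induct)
    case (less k)
    show ?case
    proof (cases "Z \<subseteq> unitsA")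
      case True
      then show ?thesis using less.prems by blast
    next
      case False
      then obtain y where y: "y \<in> Z" "y \<notin> unitsA" by blast
      then have "y \<in> Y" using less.prems(4) by blast
      then have "\<And>s. s \<in> carrier S \<Longrightarrow> \<sigma> s * y = y \<Longrightarrow> s = \<one>\<^bsub>S\<^esub>"
        and "\<And>s. s \<in> carrier S \<Longrightarrow> y * \<sigma> s = y \<Longrightarrow> s = \<one>\<^bsub>S\<^esub>"
        using left_free right_free by blast+
      then obtain u where "u \<in> unitsA" "\<forall>g\<in>stab (carrier G) y. \<alpha> g u = u"
        using stab_fixes_twisted_unit[OF less.prems(2,3) y(1) _ _ twisted_units] by blast
      then obtain Z' where Z': "is_obasis smult Z'" "act_stable Z'" "Z' - unitsA \<subseteq> Z - unitsA - {y}"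
        using orbit_replacement[OF less.prems(2,3) y(1)] by blast
      have "Z' - unitsA \<subset> Z - unitsA" using Z'(3) y by blast
      moreover have "finite (Z - unitsA)" using basis_finite[OF less.prems(2)] by simp
      ultimately have "card (Z' - unitsA) < k" using psubset_card_mono less.prems(1) by blast
      then show ?thesis using less.IH Z' less.prems(4) by blast
    qed
  qed
  then show ?thesis using Y by blast
qed

end

theorem proposition4p7:
  fixes smult :: "'o::idom \<Rightarrow> 'a::{ring,monoid_mult} \<Rightarrow> 'a"
    and m :: "'o set" and p :: nat
    and S :: "('g,'b) monoid_scheme" and \<sigma> :: "'g \<Rightarrow> 'a"
  assumes O: "standing_O m p"
    and A: "interior_alg smult S \<sigma>"
    and grp: "group S" and fin: "finite (carrier S)"
    and pgrp: "\<exists>n. card (carrier S) = p ^ n"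
    and bf: "bifree smult S \<sigma>"
  shows "(\<exists>Y. is_obasis smult Y \<and> SS_invariant S \<sigma> Y \<and> Y \<subseteq> unitsA) \<longleftrightarrow>
         (\<forall>P \<phi>. subgroup P S \<longrightarrow> \<phi> \<in> fusion_hom smult m S \<sigma> P \<longrightarrow>
                 unitsA \<inter> twfix S \<sigma> \<phi> P \<noteq> {})"
proof -
  interpret interior_p_algebra smult m p S \<sigma>
    by (intro interior_p_algebra.intro interior_algebra.intro local_oalgebra.intro oalgebra.intro
        coefficient_ring.intro interior_algebra_axioms.intro interior_p_algebra_axioms.intro)
      (use A O grp fin pgrp in \<open>auto simp: interior_alg_def\<close>)
  obtain Y where Y: "is_obasis smult Y" "act_stable Y"
    and free: "\<forall>s\<in>carrier S. \<forall>y\<in>Y. \<sigma> s * y = y \<longrightarrow> s = \<one>\<^bsub>S\<^esub>"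
      "\<forall>s\<in>carrier S. \<forall>y\<in>Y. y * \<sigma> s = y \<longrightarrow> s = \<one>\<^bsub>S\<^esub>"
    using bf unfolding bifree_def SS_invariant_iff_act_stable by blast
  show ?thesis
    unfolding SS_invariant_iff_act_stable
    using twisted_unit_if_unit_basis unit_basis_if_twisted_units[OF Y free] by blast
qed

end
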